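(* Assume $0<D(P_1\|P_2)<\infty$ and $0<D(P_2\|P_1)<\infty$, and fix $\tau\in(-D(P_1\|P_2),D(P_2\|P_1))$. For each $n\ge2$ let $G_n$ be any connected undirected graph on $n$ nodes, let $y_1,\dots,y_n$ be i.i.d. with node $i$ observing $y_i$, and run BQ-CADMM on $G_n$ with local data $r_i=\log\frac{dP_1}{dP_2}(y_i)$, quantizer parameters $a=-D(P_2\|P_1)$, $\Delta=D(P_1\|P_2)+D(P_2\|P_1)$, $\delta=D(P_1\|P_2)+\tau$ (so the quantizer threshold is $-\tau$), and $$\rho=\frac{1}{6n^2(D(P_1\|P_2)+D(P_2\|P_1))}.$$ Let $\mathcal A_n=\{y^n:\text{BQ-CADMM cycles}\}\cup\{y^n:\text{BQ-CADMM converges at }D(P_1\|P_2)\}$, $\alpha_n=P_1(\mathcal A_n^c)$, $\beta_n=P_2(\mathcal A_n)$. Then $$\liminf_{n\to\infty}-\frac1n\log\alpha_n=\Lambda^*(\tau),\qquad \liminf_{n\to\infty}-\frac1n\log\beta_n=\Lambda^*(\tau)-\tau.$$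
   Context: $P_1,P_2$ are mutually absolutely continuous probability measures on a Polish space (or finite set) $\Sigma$; $\log$ is the natural logarithm; $D(P\|P')=\mathbb E_P[\log\frac{dP}{dP'}]$; probabilities of subsets of $\Sigma^n$ refer to product measures. $\Lambda(\lambda)=\log\mathbb E_{P_1}\big[e^{-\lambda\log\frac{dP_1}{dP_2}(y)}\big]$ for $\lambda\in\mathbb R$, and $\Lambda^*(\tau)=\sup_{\lambda\in\mathbb R}\{\lambda\tau-\Lambda(\lambda)\}$. Network and algorithm: $G$ is a connected undirected simple graph on nodes $\{1,\dots,n\}$ with $m$ edges; $\mathcal N_i$ is the set of neighbors of node $i$ ($i\notin\mathcal N_i$). Given $a\in\mathbb R$, $\Delta>0$, $\delta\in(0,\Delta)$, the $\delta$-quantizer is $\mathcal Q_\delta(x)=a$ if $x\le a+\Delta-\delta$ and $a+\Delta$ otherwise. Given local data $r_1,\dots,r_n\in\mathbb R$ and $\rho>0$, BQ-CADMM is the deterministic iteration with $x_i^0=0$, $\alpha_i^0=0$ and, for $k\ge0$, $$x_i^{k+1}=\frac{1}{1+2\rho|\mathcal N_i|}\Big(\rho|\mathcal N_i|\mathcal Q_\delta(x_i^k)+\rho\sum_{j\in\mathcal N_i}\mathcal Q_\delta(x_j^k)-\alpha_i^k+r_i\Big),\quad \alpha_i^{k+1}=\alpha_i^k+\rho\Big(|\mathcal N_i|\mathcal Q_\delta(x_i^{k+1})-\sum_{j\in\mathcal N_i}\mathcal Q_\delta(x_j^{k+1})\Big).$$ BQ-CADMM "converges at $c$" if there is $k_0$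 with $\mathcal Q_\delta(x_i^k)=c$ for all $i$ and all $k\ge k_0$; it "cycles" if it converges at neither $a$ nor $a+\Delta$. *)

theory Defs
  imports "HOL-Probability.Probability"
begin

text \<open>Log-likelihood ratio log (dP/dQ)(x), with dP/dQ the Radon-Nikodym derivative of P w.r.t. Q.\<close>
definition llr :: "'a measure \<Rightarrow> 'a measure \<Rightarrow> 'a \<Rightarrow> real" where
  "llr P Q x = ln (enn2real (RN_deriv Q P x))"

text \<open>KL divergence D(P||Q) = E_P[log dP/dQ] (meaningful when the integrand is integrable).\<close>
definition KL :: "'a measure \<Rightarrow> 'a measure \<Rightarrow> real" where
  "KL P Q = integral\<^sup>L P (llr P Q)"

definition Lam :: "'a measure \<Rightarrow> 'a measure \<Rightarrow> real \<Rightarrow> ereal" where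
  "Lam P1 P2 l = (let I = (\<integral>\<^sup>+ y. ennreal (exp (- l * llr P1 P2 y)) \<partial>P1)
                  in if I = \<infinity> then \<infinity> else ereal (ln (enn2real I)))"

definition Lam_star :: "'a measure \<Rightarrow> 'a measure \<Rightarrow> real \<Rightarrow> ereal" where
  "Lam_star P1 P2 t = (SUP l \<in> (UNIV::real set). ereal (l * t) - Lam P1 P2 l)"

definition err_exp :: "nat \<Rightarrow> real \<Rightarrow> ereal" where
  "err_exp n p = (if p = 0 then \<infinity> else ereal (- (1 / real n) * ln p))"

definition simple_graph_on :: "nat \<Rightarrow> (nat \<Rightarrow> nat \<Rightarrow> bool) \<Rightarrow> bool" where
  "simple_graph_on n E \<longleftrightarrow>
     (\<forall>i j. E i j \<longrightarrow> i \<in> {1..n} \<and> j \<in> {1..n} \<and> i \<noteq> j) \<and> (\<forall>i j. E i j \<longrightarrow> E j i)"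

definition connected_on :: "nat \<Rightarrow> (nat \<Rightarrow> nat \<Rightarrow> bool) \<Rightarrow> bool" where
  "connected_on n E \<longleftrightarrow> (\<forall>i\<in>{1..n}. \<forall>j\<in>{1..n}. E\<^sup>*\<^sup>* i j)"

definition nbrs :: "nat \<Rightarrow> (nat \<Rightarrow> nat \<Rightarrow> bool) \<Rightarrow> nat \<Rightarrow> nat set" where
  "nbrs n E i = {j \<in> {1..n}. E i j}"

definition quant :: "real \<Rightarrow> real \<Rightarrow> real \<Rightarrow> real \<Rightarrow> real" where
  "quant a D d x = (if x \<le> a + D - d then a else a + D)"

definition bq_step :: "nat \<Rightarrow> (nat \<Rightarrow> nat \<Rightarrow> bool) \<Rightarrow> real \<Rightarrow> real \<Rightarrow> real \<Rightarrow> real \<Rightarrow>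
    (nat \<Rightarrow> real) \<Rightarrow> (nat \<Rightarrow> real) \<times> (nat \<Rightarrow> real) \<Rightarrow> (nat \<Rightarrow> real) \<times> (nat \<Rightarrow> real)" where
  "bq_step n E a D d \<rho> r s =
     (let x = fst s; al = snd s; Q = quant a D d;
          x' = (\<lambda>i. (\<rho> * real (card (nbrs n E i)) * Q (x i) + \<rho> * (\<Sum>j\<in>nbrs n E i. Q (x j))
                      - al i + r i) / (1 + 2 * \<rho> * real (card (nbrs n E i))));
          al' = (\<lambda>i. al i + \<rho> * (real (card (nbrs n E i)) * Q (x' i) - (\<Sum>j\<in>nbrs n E i. Q (x' j))))
      in (x', al'))"

definition bq_iter :: "nat \<Rightarrow> (nat \<Rightarrow> nat \<Rightarrow> bool) \<Rightarrow> real \<Rightarrow> real \<Rightarrow> real \<Rightarrow> real \<Rightarrow>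
    (nat \<Rightarrow> real) \<Rightarrow> nat \<Rightarrow> (nat \<Rightarrow> real) \<times> (nat \<Rightarrow> real)" where
  "bq_iter n E a D d \<rho> r k = (bq_step n E a D d \<rho> r ^^ k) (\<lambda>_. 0, \<lambda>_. 0)"

definition bq_converges_at :: "nat \<Rightarrow> (nat \<Rightarrow> nat \<Rightarrow> bool) \<Rightarrow> real \<Rightarrow> real \<Rightarrow> real \<Rightarrow> real \<Rightarrow>
    (nat \<Rightarrow> real) \<Rightarrow> real \<Rightarrow> bool" where
  "bq_converges_at n E a D d \<rho> r c \<longleftrightarrow>
     (\<exists>k0. \<forall>k\<ge>k0. \<forall>i\<in>{1..n}. quant a D d (fst (bq_iter n E a D d \<rho> r k) i) = c)"

definition bq_cycles :: "nat \<Rightarrow> (nat \<Rightarrow> nat \<Rightarrow> bool) \<Rightarrow> real \<Rightarrow> real \<Rightarrow> real \<Rightarrow> real \<Rightarrow>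
    (nat \<Rightarrow> real) \<Rightarrow> bool" where
  "bq_cycles n E a D d \<rho> r \<longleftrightarrow>
     \<not> bq_converges_at n E a D d \<rho> r a \<and> \<not> bq_converges_at n E a D d \<rho> r (a + D)"

definition accept_set :: "'a measure \<Rightarrow> 'a measure \<Rightarrow> real \<Rightarrow> nat \<Rightarrow> (nat \<Rightarrow> nat \<Rightarrow> bool) \<Rightarrow> (nat \<Rightarrow> 'a) set" where
  "accept_set M1 M2 \<tau> n E = {y \<in> space (PiM {1..n} (\<lambda>_. M1)).
              let r = (\<lambda>i. llr M1 M2 (y i));
                  a = - KL M2 M1;
                  D = KL M1 M2 + KL M2 M1;
                  d = KL M1 M2 + \<tau>;
                  \<rho> = 1 / (6 * (real n)\<^sup>2 * D)
              in bq_cycles n E a D d \<rho> r \<or> bq_converges_at n E a D d \<rho> r (KL M1 M2)}"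

end

theory Submission
  imports Defs
begin

text \<open>With \<open>\<rho> = 1/(6 n\<^sup>2 \<Delta>)\<close> the quantized ADMM iteration is, up to an error below one, a
  threshold test on the sum of the log-likelihood ratios. The duals sum to zero, so the gaps
  \<open>r\<^sub>i - \<alpha>\<^sub>i - thr\<close> sum to \<open>\<Sum> r\<^sub>i - n thr\<close>; a high node keeps its gap above \<open>- 3 \<rho> n \<Delta>\<close>,
  a node converged low has gap below \<open>2 \<rho> n \<Delta>\<close>. The duals live on the lattice \<open>\<rho> \<Delta> \<int>\<close> and
  stay bounded, so the iteration is eventually periodic; over a period the numbers of high steps
  form a harmonic function on the connected graph, hence are equal at all nodes. Therefore the
  iteration converges to the low value when \<open>\<Sum> r\<^sub>i < - n \<tau> - 1/2\<close> and only if
  \<open>\<Sum> r\<^sub>i \<le> - n \<tau> + 1/3\<close>. For these half-spaces the Chernoff bound gives the lower bounds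
  \<open>\<Lambda>*(\<tau>)\<close> and \<open>\<Lambda>*(\<tau>) - \<tau>\<close> on the exponents, and exponential tilting at an interior
  maximizer of \<open>\<mu> \<tau> - \<Lambda>(\<mu>)\<close>, \<open>0 < \<mu> < 1\<close>, gives the matching upper bounds.\<close>

section \<open>Elementary exponential inequalities\<close>

lemma exp_diff_le_mult: "exp u - exp v \<le> (u - v) * exp u" for u v :: real
proof -
  have "exp (v - u) \<ge> 1 + (v - u)" by (rule exp_ge_add_one_self)
  hence "exp v \<ge> exp u * (1 + (v - u))"
    by (metis exp_diff exp_gt_zero less_eq_real_def pos_le_divide_eq mult.commute)
  thus ?thesis by (simp add: algebra_simps)
qed

lemma abs_exp_diff_le: "\<bar>exp u - exp v\<bar> \<le> \<bar>u - v\<bar> * max (exp u) (exp v)" for u v :: real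
proof (cases "u \<ge> v")
  case True
  then show ?thesis using exp_diff_le_mult[of u v] by (simp add: max_def)
next
  case False
  then show ?thesis using exp_diff_le_mult[of v u] by (simp add: max_def abs_minus_commute)
qed

lemma exp_mult_le_one_plus_exp: "0 \<le> \<nu> \<Longrightarrow> \<nu> \<le> 1 \<Longrightarrow> exp (\<nu> * y) \<le> 1 + exp y" for \<nu> y :: real
proof (cases "y \<ge> 0")
  case True
  assume "0 \<le> \<nu>" "\<nu> \<le> 1"
  hence "\<nu> * y \<le> y" using True by (simp add: mult_left_le_one_le)
  hence "exp (\<nu> * y) \<le> exp y" by simp
  thus ?thesis by linarith
next
  case False
  assume "0 \<le> \<nu>" "\<nu> \<le> 1"
  hence "\<nu> * y \<le> 0" using False by (simp add: mult_nonneg_nonpos)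
  thus ?thesis using exp_gt_zero[of y] exp_le_one_iff[of "\<nu> * y"] by linarith
qed

lemma abs_exp_mult_minus_one_le:
  fixes \<nu> y :: real
  assumes "0 \<le> \<nu>" "\<nu> \<le> 1"
  shows "\<bar>exp (\<nu> * y) - 1\<bar> \<le> \<nu> * \<bar>y\<bar> * (1 + exp y)"
proof -
  have "\<bar>exp (\<nu> * y) - exp 0\<bar> \<le> \<bar>\<nu> * y\<bar> * max (exp (\<nu> * y)) (exp 0)"
    using abs_exp_diff_le[of "\<nu> * y" 0] by simp
  also have "\<dots> \<le> \<bar>\<nu> * y\<bar> * (1 + exp y)"
    using exp_mult_le_one_plus_exp[OF assms] by (intro mult_left_mono) auto
  finally show ?thesis using assms by (simp add: abs_mult)
qed

lemma exp_minus_one_minus_bounds: "0 \<le> exp t - 1 - t \<and> exp t - 1 - t \<le> t\<^sup>2 * (1 + exp \<bar>t\<bar>)" for t :: real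
proof
  show "0 \<le> exp t - 1 - t" using exp_ge_add_one_self[of t] by linarith
  have convex: "exp t - 1 - t \<le> t * (exp t - 1)"
  proof -
    have "exp (-t) * exp t \<ge> (1 - t) * exp t"
      using exp_ge_add_one_self[of "- t"] by (simp add: mult_right_mono)
    thus ?thesis by (simp add: exp_minus algebra_simps)
  qed
  have "\<bar>exp t - exp 0\<bar> \<le> \<bar>t\<bar> * max (exp t) (exp 0)" using abs_exp_diff_le[of t 0] by simp
  also have "\<dots> \<le> \<bar>t\<bar> * (1 + exp \<bar>t\<bar>)" by (intro mult_left_mono) (auto simp: max_def add_increasing)
  finally have "\<bar>exp t - 1\<bar> \<le> \<bar>t\<bar> * (1 + exp \<bar>t\<bar>)" by simp
  hence "\<bar>t\<bar> * \<bar>exp t - 1\<bar> \<le> \<bar>t\<bar> * (\<bar>t\<bar> * (1 + exp \<bar>t\<bar>))"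
    by (rule mult_left_mono) simp
  moreover have "t * (exp t - 1) \<le> \<bar>t\<bar> * \<bar>exp t - 1\<bar>"
    by (simp only: abs_mult[symmetric] abs_ge_self)
  ultimately have "t * (exp t - 1) \<le> \<bar>t\<bar> * (\<bar>t\<bar> * (1 + exp \<bar>t\<bar>))" by linarith
  thus "exp t - 1 - t \<le> t\<^sup>2 * (1 + exp \<bar>t\<bar>)" using convex by (simp add: power2_eq_square)
qed

lemma exp_plus_exp_minus_le: "exp b + exp (- b) - 2 \<le> b\<^sup>2 * exp \<bar>b\<bar>" for b :: real
proof -
  have sq: "exp b + exp (- b) - 2 = (exp (b/2) - exp (-b/2))\<^sup>2"
    by (simp add: power2_eq_square algebra_simps exp_add[symmetric])
  have "\<bar>exp (b/2) - exp (-b/2)\<bar> \<le> \<bar>b/2 - (-b/2)\<bar> * max (exp (b/2)) (exp (-b/2))"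
    by (rule abs_exp_diff_le)
  moreover have "max (exp (b/2)) (exp (-b/2)) = exp (\<bar>b\<bar>/2)" by (auto simp: max_def abs_if)
  ultimately have "\<bar>exp (b/2) - exp (-b/2)\<bar>\<^sup>2 \<le> (\<bar>b\<bar> * exp (\<bar>b\<bar>/2))\<^sup>2"
    by (intro power_mono) auto
  also have "\<dots> = b\<^sup>2 * (exp (\<bar>b\<bar>/2))\<^sup>2" by (simp add: power_mult_distrib)
  also have "\<dots> = b\<^sup>2 * exp \<bar>b\<bar>" by (simp add: power2_eq_square exp_add[symmetric])
  finally show ?thesis using sq by simp
qed

lemma square_le_exp_abs: "0 < \<epsilon> \<Longrightarrow> x\<^sup>2 \<le> (4 / \<epsilon>\<^sup>2) * exp (\<epsilon> * \<bar>x\<bar>)" for x \<epsilon> :: real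
proof -
  assume e: "0 < \<epsilon>"
  let ?t = "\<epsilon> * \<bar>x\<bar>"
  have "?t/2 \<le> exp (?t/2)" using exp_ge_add_one_self[of "?t/2"] by linarith
  hence "(?t/2)\<^sup>2 \<le> (exp (?t/2))\<^sup>2" by (rule power_mono) (use e in simp)
  also have "\<dots> = exp ?t" by (simp add: power2_eq_square exp_add[symmetric])
  finally have "(4 / \<epsilon>\<^sup>2) * (?t/2)\<^sup>2 \<le> (4 / \<epsilon>\<^sup>2) * exp ?t" using e by (intro mult_left_mono) auto
  moreover have "(4 / \<epsilon>\<^sup>2) * (?t/2)\<^sup>2 = x\<^sup>2" using e by (simp add: power2_eq_square field_simps)
  ultimately show ?thesis by simp
qed

lemma square_mult_exp_le:
  fixes x \<epsilon> \<nu> :: real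
  assumes e: "0 < \<epsilon>" and \<nu>: "\<epsilon> \<le> \<nu>" "\<nu> \<le> 1 - \<epsilon>"
  shows "x\<^sup>2 * exp (- \<nu> * x) \<le> (4 / \<epsilon>\<^sup>2) * (1 + exp (- x))"
proof -
  have "exp (\<epsilon> * \<bar>x\<bar> - \<nu> * x) \<le> 1 + exp (- x)"
  proof (cases "x \<ge> 0")
    case True
    have "\<epsilon> * x \<le> \<nu> * x" using True \<nu> by (intro mult_right_mono) auto
    hence "exp (\<epsilon> * \<bar>x\<bar> - \<nu> * x) \<le> 1" using True by simp
    thus ?thesis using exp_gt_zero[of "-x"] by linarith
  next
    case False
    have "(\<epsilon> + \<nu>) * (- x) \<le> 1 * (- x)" using False \<nu> by (intro mult_right_mono) auto
    hence "\<epsilon> * \<bar>x\<bar> - \<nu> * x \<le> - x" using False by (simp add: algebra_simps)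
    hence "exp (\<epsilon> * \<bar>x\<bar> - \<nu> * x) \<le> exp (- x)" by simp
    thus ?thesis by linarith
  qed
  hence "(4 / \<epsilon>\<^sup>2) * exp (\<epsilon> * \<bar>x\<bar> - \<nu> * x) \<le> (4 / \<epsilon>\<^sup>2) * (1 + exp (- x))"
    by (rule mult_left_mono) simp
  hence "(4 / \<epsilon>\<^sup>2) * exp (\<epsilon> * \<bar>x\<bar>) * exp (- \<nu> * x) \<le> (4 / \<epsilon>\<^sup>2) * (1 + exp (- x))"
    by (simp add: mult.assoc exp_add[symmetric])
  moreover have "x\<^sup>2 * exp (- \<nu> * x) \<le> (4 / \<epsilon>\<^sup>2) * exp (\<epsilon> * \<bar>x\<bar>) * exp (- \<nu> * x)"
    using square_le_exp_abs[OF e, of x] by (intro mult_right_mono) auto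
  ultimately show ?thesis by linarith
qed

lemma exp_second_difference_le:
  fixes \<epsilon> h \<mu> y :: real
  assumes e: "0 < \<epsilon>" and h: "0 \<le> h" and lo: "\<epsilon> \<le> \<mu> - h" and hi: "\<mu> + h \<le> 1 - \<epsilon>"
  shows "exp (- (\<mu> + h) * y) + exp (- (\<mu> - h) * y) \<le> 2 * exp (- \<mu> * y) + h\<^sup>2 * (8 / \<epsilon>\<^sup>2) * (1 + exp (- y))"
proof -
  let ?b = "h * y"
  have "exp (- \<mu> * y) * (exp ?b + exp (- ?b) - 2) \<le> exp (- \<mu> * y) * (?b\<^sup>2 * exp \<bar>?b\<bar>)"
    by (rule mult_left_mono[OF exp_plus_exp_minus_le]) simp
  also have "\<dots> = h\<^sup>2 * (y\<^sup>2 * exp (- \<mu> * y + \<bar>?b\<bar>))"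
    by (simp only: exp_add power_mult_distrib mult_ac)
  also have "\<dots> \<le> h\<^sup>2 * (y\<^sup>2 * exp (- (\<mu> - h) * y) + y\<^sup>2 * exp (- (\<mu> + h) * y))"
  proof (rule mult_left_mono)
    have "exp (- \<mu> * y + \<bar>?b\<bar>) \<le> exp (- (\<mu> - h) * y) + exp (- (\<mu> + h) * y)"
    proof (cases "0 \<le> y")
      case True
      hence "- \<mu> * y + \<bar>?b\<bar> = - (\<mu> - h) * y" using h by (simp add: abs_mult algebra_simps)
      thus ?thesis by simp
    next
      case False
      hence "- \<mu> * y + \<bar>?b\<bar> = - (\<mu> + h) * y" using h by (simp add: abs_mult algebra_simps)
      thus ?thesis by simp
    qed
    thus "y\<^sup>2 * exp (- \<mu> * y + \<bar>?b\<bar>) \<le> y\<^sup>2 * exp (- (\<mu> - h) * y) + y\<^sup>2 * exp (- (\<mu> + h) * y)"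
      by (simp add: distrib_left[symmetric] mult_left_mono)
  qed simp
  also have "\<dots> \<le> h\<^sup>2 * ((4 / \<epsilon>\<^sup>2) * (1 + exp (- y)) + (4 / \<epsilon>\<^sup>2) * (1 + exp (- y)))"
  proof (rule mult_left_mono)
    have "y\<^sup>2 * exp (- (\<mu> - h) * y) \<le> (4 / \<epsilon>\<^sup>2) * (1 + exp (- y))"
      by (rule square_mult_exp_le[OF e]) (use lo hi h in auto)
    moreover have "y\<^sup>2 * exp (- (\<mu> + h) * y) \<le> (4 / \<epsilon>\<^sup>2) * (1 + exp (- y))"
      by (rule square_mult_exp_le[OF e]) (use lo hi h in auto)
    ultimately show "y\<^sup>2 * exp (- (\<mu> - h) * y) + y\<^sup>2 * exp (- (\<mu> + h) * y)
        \<le> (4 / \<epsilon>\<^sup>2) * (1 + exp (- y)) + (4 / \<epsilon>\<^sup>2) * (1 + exp (- y))" by linarith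
  qed simp
  also have "\<dots> = h\<^sup>2 * (8 / \<epsilon>\<^sup>2) * (1 + exp (- y))" by (simp add: algebra_simps)
  finally have key: "exp (- \<mu> * y) * (exp ?b + exp (- ?b) - 2) \<le> h\<^sup>2 * (8 / \<epsilon>\<^sup>2) * (1 + exp (- y))" .
  have "exp (- (\<mu> + h) * y) = exp (- \<mu> * y) * exp (- ?b)"
    and "exp (- (\<mu> - h) * y) = exp (- \<mu> * y) * exp ?b"
    by (simp_all add: exp_add[symmetric] algebra_simps)
  then show ?thesis using key by (simp add: algebra_simps)
qed

lemma exp_difference_quotient_le:
  fixes \<nu> y :: real
  assumes "0 < \<nu>" "\<nu> \<le> 1"
  shows "\<bar>(exp (\<nu> * y) - 1) / \<nu> - y\<bar> \<le> \<nu> * (y\<^sup>2 * (1 + exp \<bar>y\<bar>))"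
proof -
  let ?t = "\<nu> * y"
  have T: "0 \<le> exp ?t - 1 - ?t" "exp ?t - 1 - ?t \<le> ?t\<^sup>2 * (1 + exp \<bar>?t\<bar>)"
    using exp_minus_one_minus_bounds[of ?t] by auto
  have "\<nu> * \<bar>y\<bar> \<le> 1 * \<bar>y\<bar>" by (rule mult_right_mono) (use assms in auto)
  hence "exp \<bar>?t\<bar> \<le> exp \<bar>y\<bar>" using assms by (simp add: abs_mult)
  hence "?t\<^sup>2 * (1 + exp \<bar>?t\<bar>) \<le> ?t\<^sup>2 * (1 + exp \<bar>y\<bar>)" by (intro mult_left_mono) auto
  also have "?t\<^sup>2 * (1 + exp \<bar>y\<bar>) = (\<nu> * (y\<^sup>2 * (1 + exp \<bar>y\<bar>))) * \<nu>" by (simp add: power2_eq_square)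
  finally have "(exp ?t - 1 - ?t) / \<nu> \<le> \<nu> * (y\<^sup>2 * (1 + exp \<bar>y\<bar>))"
    using T(2) by (subst pos_divide_le_eq[OF assms(1)]) linarith
  moreover have "0 \<le> (exp ?t - 1 - ?t) / \<nu>" using T(1) assms by simp
  moreover have "(exp ?t - 1) / \<nu> - y = (exp ?t - 1 - ?t) / \<nu>"
    using assms by (simp add: diff_divide_distrib)
  ultimately show ?thesis by simp
qed

section \<open>BQ-CADMM on a connected graph\<close>

locale bq_cadmm =
  fixes n :: nat and E :: "nat \<Rightarrow> nat \<Rightarrow> bool" and a D d \<rho> :: real and r :: "nat \<Rightarrow> real"
  assumes graph: "simple_graph_on n E" and connected: "connected_on n E" and n_pos: "1 \<le> n"
    and rho_pos: "0 < \<rho>" and d_pos: "0 < d" and d_less_D: "d < D"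
begin

definition "nbr i = nbrs n E i"
definition "deg i = real (card (nbr i))"
definition "primal k = fst (bq_iter n E a D d \<rho> r k)"
definition "dual k = snd (bq_iter n E a D d \<rho> r k)"
definition "q k i = quant a D d (primal k i)"
definition "thr = a + D - d"
definition "gap k i = r i - dual k i - thr"

lemma D_pos: "0 < D" using d_pos d_less_D by simp

lemma nbr_subset: "nbr i \<subseteq> {1..n}" unfolding nbr_def nbrs_def by auto

lemma finite_nbr [simp]: "finite (nbr i)" using nbr_subset finite_subset by blast

lemma deg_nonneg: "0 \<le> deg i" by (simp add: deg_def)

lemma deg_le: "deg i \<le> real n"
  using card_mono[OF _ nbr_subset, of i] by (simp add: deg_def)

lemma dual_0: "dual 0 = (\<lambda>_. 0)" by (simp add: dual_def bq_iter_def)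

lemma primal_Suc: "primal (Suc k) i =
    (\<rho> * deg i * q k i + \<rho> * (\<Sum>j\<in>nbr i. q k j) - dual k i + r i) / (1 + 2 * \<rho> * deg i)"
  by (simp add: primal_def dual_def bq_iter_def bq_step_def Let_def q_def deg_def nbr_def)

lemma dual_Suc: "dual (Suc k) i = dual k i + \<rho> * (\<Sum>j\<in>nbr i. q (Suc k) i - q (Suc k) j)"
proof -
  have "bq_iter n E a D d \<rho> r (Suc k) = bq_step n E a D d \<rho> r (bq_iter n E a D d \<rho> r k)"
    by (simp add: bq_iter_def)
  then show ?thesis
    by (simp add: primal_def dual_def bq_step_def Let_def q_def deg_def nbr_def sum_subtractf)
qed

lemma q_cases: "q k i = a \<or> q k i = a + D"
  by (simp add: q_def quant_def)

lemma q_ge: "a \<le> q k i" and q_le: "q k i \<le> a + D"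
  using q_cases[of k i] D_pos by auto

lemma q_diff_bounds:
  shows "- D \<le> q k i - q k j" and "q k i - q k j \<le> D"
    and "q k i = a \<Longrightarrow> q k i - q k j \<le> 0" and "q k i = a + D \<Longrightarrow> 0 \<le> q k i - q k j"
  using q_ge[of k i] q_le[of k i] q_ge[of k j] q_le[of k j] by auto

lemma gap_Suc: "gap (Suc k) i = gap k i - \<rho> * (\<Sum>j\<in>nbr i. q (Suc k) i - q (Suc k) j)"
  by (simp add: gap_def dual_Suc)

text \<open>Quantized states lie within \<open>[thr - (D - d), thr + d]\<close>, so the primal update turns
  the quantization of the new iterate into a bound on the previous gap.\<close>
lemma gap_gt_if_high:
  assumes "q (Suc k) i = a + D"
  shows "- 2 * \<rho> * deg i * d < gap k i"
proof -
  have den: "0 < 1 + 2 * \<rho> * deg i" using rho_pos deg_nonneg[of i] by (simp add: add_pos_nonneg)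
  have "thr < primal (Suc k) i"
    using assms D_pos by (auto simp: q_def quant_def thr_def split: if_splits)
  hence "thr * (1 + 2 * \<rho> * deg i) < \<rho> * deg i * q k i + \<rho> * (\<Sum>j\<in>nbr i. q k j) - dual k i + r i"
    using den by (simp add: primal_Suc pos_less_divide_eq)
  moreover have "\<rho> * deg i * q k i \<le> \<rho> * deg i * (thr + d)"
    using rho_pos deg_nonneg[of i] q_cases[of k i] D_pos by (intro mult_left_mono) (auto simp: thr_def)
  moreover have "(\<Sum>j\<in>nbr i. q k j) \<le> (\<Sum>j\<in>nbr i. thr + d)"
    by (intro sum_mono) (simp add: thr_def q_le)
  hence "\<rho> * (\<Sum>j\<in>nbr i. q k j) \<le> \<rho> * (deg i * (thr + d))"
    using rho_pos by (simp add: deg_def mult_left_mono)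
  ultimately show ?thesis by (simp add: gap_def algebra_simps)
qed

lemma gap_le_if_low:
  assumes "q (Suc k) i = a"
  shows "gap k i \<le> 2 * \<rho> * deg i * (D - d)"
proof -
  have den: "0 < 1 + 2 * \<rho> * deg i" using rho_pos deg_nonneg[of i] by (simp add: add_pos_nonneg)
  have "primal (Suc k) i \<le> thr"
    using assms D_pos by (auto simp: q_def quant_def thr_def split: if_splits)
  hence "\<rho> * deg i * q k i + \<rho> * (\<Sum>j\<in>nbr i. q k j) - dual k i + r i \<le> thr * (1 + 2 * \<rho> * deg i)"
    using den by (simp add: primal_Suc pos_divide_le_eq)
  moreover have "\<rho> * deg i * (thr - (D - d)) \<le> \<rho> * deg i * q k i"
    using rho_pos deg_nonneg[of i] q_cases[of k i] D_pos by (intro mult_left_mono) (auto simp: thr_def)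
  moreover have "(\<Sum>j\<in>nbr i. thr - (D - d)) \<le> (\<Sum>j\<in>nbr i. q k j)"
    by (intro sum_mono) (simp add: thr_def q_ge)
  hence "\<rho> * (deg i * (thr - (D - d))) \<le> \<rho> * (\<Sum>j\<in>nbr i. q k j)"
    using rho_pos by (simp add: deg_def mult_left_mono)
  ultimately show ?thesis by (simp add: gap_def algebra_simps)
qed

lemma dual_step_bounds:
  shows "- (\<rho> * deg i * D) \<le> \<rho> * (\<Sum>j\<in>nbr i. q k i - q k j)"
    and "\<rho> * (\<Sum>j\<in>nbr i. q k i - q k j) \<le> \<rho> * deg i * D"
    and "q k i = a \<Longrightarrow> \<rho> * (\<Sum>j\<in>nbr i. q k i - q k j) \<le> 0"
    and "q k i = a + D \<Longrightarrow> 0 \<le> \<rho> * (\<Sum>j\<in>nbr i. q k i - q k j)"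
proof -
  have "\<rho> * (\<Sum>j\<in>nbr i. - D) \<le> \<rho> * (\<Sum>j\<in>nbr i. q k i - q k j)"
    using rho_pos by (intro mult_left_mono sum_mono q_diff_bounds(1)) auto
  then show "- (\<rho> * deg i * D) \<le> \<rho> * (\<Sum>j\<in>nbr i. q k i - q k j)" by (simp add: deg_def)
  have "\<rho> * (\<Sum>j\<in>nbr i. q k i - q k j) \<le> \<rho> * (\<Sum>j\<in>nbr i. D)"
    using rho_pos by (intro mult_left_mono sum_mono q_diff_bounds(2)) auto
  then show "\<rho> * (\<Sum>j\<in>nbr i. q k i - q k j) \<le> \<rho> * deg i * D" by (simp add: deg_def)
  show "\<rho> * (\<Sum>j\<in>nbr i. q k i - q k j) \<le> 0" if "q k i = a"
    using rho_pos q_diff_bounds(3)[OF that] by (intro mult_nonneg_nonpos sum_nonpos) auto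
  show "0 \<le> \<rho> * (\<Sum>j\<in>nbr i. q k i - q k j)" if "q k i = a + D"
    using rho_pos q_diff_bounds(4)[OF that] by (intro mult_nonneg_nonneg sum_nonneg) auto
qed

text \<open>The band \<open>- 3 \<rho> n D\<close> below which gaps of high nodes cannot fall is the error that the
  choice of \<open>\<rho>\<close> makes negligible.\<close>
lemma gap_Suc_ge_if_low: "q (Suc k) i = a \<Longrightarrow> gap k i \<le> gap (Suc k) i"
  using dual_step_bounds(3)[where k="Suc k" and i=i] by (simp add: gap_Suc)

lemma gap_Suc_gt_if_high:
  assumes "q (Suc k) i = a + D"
  shows "- 3 * \<rho> * n * D < gap (Suc k) i"
proof -
  have "2 * \<rho> * deg i * d \<le> 2 * \<rho> * deg i * D" "\<rho> * deg i * D \<le> \<rho> * n * D"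
    using rho_pos deg_nonneg[of i] deg_le[of i] d_less_D D_pos
    by (simp_all add: mult_left_mono mult_right_mono)
  thus ?thesis using gap_gt_if_high[OF assms] dual_step_bounds(2)[where k="Suc k" and i=i] by (simp add: gap_Suc)
qed

lemma gap_stays_above:
  assumes "q (Suc k) i = a + D"
  shows "- 3 * \<rho> * n * D < gap (Suc k + m) i"
proof (induction m)
  case 0 then show ?case using gap_Suc_gt_if_high[OF assms] by simp
next
  case (Suc m)
  consider "q (Suc (Suc k + m)) i = a" | "q (Suc (Suc k + m)) i = a + D" using q_cases by blast
  then show ?case
  proof cases
    case 1 then show ?thesis using gap_Suc_ge_if_low[OF 1] Suc by simp
  next
    case 2 then show ?thesis using gap_Suc_gt_if_high[OF 2] by simp
  qed
qed

lemma gap_le: "gap k i \<le> max (gap 0 i) (3 * \<rho> * n * D)"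
proof (induction k)
  case (Suc k)
  consider "q (Suc k) i = a" | "q (Suc k) i = a + D" using q_cases by blast
  then show ?case
  proof cases
    case 1
    have "2 * \<rho> * deg i * (D - d) \<le> 2 * \<rho> * n * D"
      using rho_pos deg_nonneg[of i] deg_le[of i] d_pos d_less_D by (intro mult_mono) auto
    moreover have "\<rho> * deg i * D \<le> \<rho> * n * D"
      using rho_pos deg_le[of i] D_pos by (simp add: mult_left_mono mult_right_mono)
    ultimately show ?thesis
      using gap_le_if_low[OF 1] dual_step_bounds(1)[where k="Suc k" and i=i] by (simp add: gap_Suc)
  next
    case 2
    then show ?thesis using Suc dual_step_bounds(4)[where k="Suc k" and i=i] by (simp add: gap_Suc)
  qed
qed simp

lemma gap_ge: "min (gap 0 i) (- 3 * \<rho> * n * D) \<le> gap k i"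
proof (induction k)
  case (Suc k)
  consider "q (Suc k) i = a" | "q (Suc k) i = a + D" using q_cases by blast
  then show ?case
  proof cases
    case 1 then show ?thesis using gap_Suc_ge_if_low[OF 1] Suc by simp
  next
    case 2 then show ?thesis using gap_Suc_gt_if_high[OF 2] by simp
  qed
qed simp

lemma sum_nbr_differences: "(\<Sum>i\<in>{1..n}. \<Sum>j\<in>nbr i. f i - f j) = (0::real)"
proof -
  have sym: "E i j = E j i" for i j using graph by (auto simp: simple_graph_on_def)
  have "(\<Sum>i\<in>{1..n}. \<Sum>j\<in>nbr i. f j) = (\<Sum>i\<in>{1..n}. \<Sum>j\<in>{1..n}. if E i j then f j else 0)"
    unfolding nbr_def nbrs_def by (simp only: sum.inter_filter[OF finite_atLeastAtMost])
  also have "\<dots> = (\<Sum>j\<in>{1..n}. \<Sum>i\<in>{1..n}. if E j i then f j else 0)"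
    by (subst sum.swap) (simp add: sym)
  also have "\<dots> = (\<Sum>j\<in>{1..n}. \<Sum>i\<in>nbr j. f j)"
    unfolding nbr_def nbrs_def by (simp only: sum.inter_filter[OF finite_atLeastAtMost])
  finally show ?thesis by (simp add: sum_subtractf)
qed

lemma sum_dual: "(\<Sum>i\<in>{1..n}. dual k i) = 0"
proof (induction k)
  case (Suc k)
  have "(\<Sum>i\<in>{1..n}. dual (Suc k) i)
      = (\<Sum>i\<in>{1..n}. dual k i) + \<rho> * (\<Sum>i\<in>{1..n}. \<Sum>j\<in>nbr i. q (Suc k) i - q (Suc k) j)"
    by (simp add: dual_Suc sum.distrib sum_distrib_left)
  then show ?case using Suc sum_nbr_differences[of "q (Suc k)"] by simp
qed (simp add: dual_0)

lemma sum_gap: "(\<Sum>i\<in>{1..n}. gap k i) = (\<Sum>i\<in>{1..n}. r i) - real n * thr"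
  using sum_dual[of k] by (simp add: gap_def sum_subtractf)

text \<open>The dual variables move on the lattice \<open>\<rho> D \<int>\<close>; with the gap bounds this leaves only
  finitely many joint states, so the deterministic iteration is eventually periodic.\<close>
definition "dual_count k i =
  (\<Sum>l<k. \<Sum>j\<in>nbr i. of_bool (q (Suc l) i \<noteq> a) - of_bool (q (Suc l) j \<noteq> a) :: int)"

lemma dual_eq_dual_count: "dual k i = \<rho> * D * of_int (dual_count k i)"
proof (induction k)
  case (Suc k)
  have "(\<Sum>j\<in>nbr i. q (Suc k) i - q (Suc k) j)
      = (\<Sum>j\<in>nbr i. D * of_int (of_bool (q (Suc k) i \<noteq> a) - of_bool (q (Suc k) j \<noteq> a)))"
  proof (rule sum.cong)
    fix j
    show "q (Suc k) i - q (Suc k) j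
        = D * of_int (of_bool (q (Suc k) i \<noteq> a) - of_bool (q (Suc k) j \<noteq> a))"
      using q_cases[of "Suc k" i] q_cases[of "Suc k" j] by auto
  qed simp
  also have "\<dots> = D * of_int (\<Sum>j\<in>nbr i. of_bool (q (Suc k) i \<noteq> a) - of_bool (q (Suc k) j \<noteq> a))"
    by (simp add: sum_distrib_left)
  finally have "(\<Sum>j\<in>nbr i. q (Suc k) i - q (Suc k) j)
      = D * of_int (\<Sum>j\<in>nbr i. of_bool (q (Suc k) i \<noteq> a) - of_bool (q (Suc k) j \<noteq> a))" .
  then show ?case using Suc by (simp add: dual_Suc dual_count_def algebra_simps)
qed (simp add: dual_0 dual_count_def)

lemma finite_state_range: "finite (range (\<lambda>k. restrict (\<lambda>i. (dual_count k i, q k i)) {1..n}))"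
proof -
  define M where "M i = \<lceil>(\<bar>gap 0 i\<bar> + \<bar>r i - thr\<bar> + 3 * \<rho> * n * D) / (\<rho> * D)\<rceil>" for i
  have rD: "0 < \<rho> * D" using rho_pos D_pos by simp
  have "\<bar>dual k i\<bar> \<le> \<bar>gap 0 i\<bar> + \<bar>r i - thr\<bar> + 3 * \<rho> * n * D" for k i
  proof -
    have "0 \<le> 3 * \<rho> * n * D" using rho_pos D_pos by simp
    hence "max (gap 0 i) (3 * \<rho> * n * D) \<le> \<bar>gap 0 i\<bar> + 3 * \<rho> * n * D"
      and "- (\<bar>gap 0 i\<bar> + 3 * \<rho> * n * D) \<le> min (gap 0 i) (- 3 * \<rho> * n * D)"
      by (intro max.boundedI min.boundedI; linarith)+
    hence "\<bar>gap k i\<bar> \<le> \<bar>gap 0 i\<bar> + 3 * \<rho> * n * D"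
      using gap_le[of k i] gap_ge[of i k] unfolding abs_le_iff by (intro conjI; linarith)
    moreover have "\<bar>dual k i\<bar> \<le> \<bar>r i - thr\<bar> + \<bar>gap k i\<bar>"
      using abs_triangle_ineq4[of "r i - thr" "gap k i"] by (simp add: gap_def)
    ultimately show ?thesis by linarith
  qed
  hence "\<rho> * D * \<bar>of_int (dual_count k i)\<bar> \<le> \<bar>gap 0 i\<bar> + \<bar>r i - thr\<bar> + 3 * \<rho> * n * D" for k i
    using rho_pos D_pos by (simp add: dual_eq_dual_count abs_mult abs_of_pos)
  hence "\<bar>of_int (dual_count k i)\<bar> \<le> (\<bar>gap 0 i\<bar> + \<bar>r i - thr\<bar> + 3 * \<rho> * n * D) / (\<rho> * D)" for k i
    using rD by (simp add: pos_le_divide_eq mult.commute)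
  hence count_le: "\<bar>dual_count k i\<bar> \<le> M i" for k i
    unfolding M_def by (metis ceiling_mono ceiling_of_int of_int_abs)
  have "restrict (\<lambda>i. (dual_count k i, q k i)) {1..n} \<in> PiE {1..n} (\<lambda>i. {-M i..M i} \<times> {a, a + D})" for k
  proof (rule PiE_I)
    fix i assume "i \<in> {1..n}"
    have "- M i \<le> dual_count k i" "dual_count k i \<le> M i" using count_le[of k i] by (simp_all add: abs_le_iff)
    then show "restrict (\<lambda>i. (dual_count k i, q k i)) {1..n} i \<in> {-M i..M i} \<times> {a, a + D}"
      using q_cases[of k i] \<open>i \<in> {1..n}\<close> by auto
  qed auto
  hence "range (\<lambda>k. restrict (\<lambda>i. (dual_count k i, q k i)) {1..n})
      \<subseteq> PiE {1..n} (\<lambda>i. {-M i..M i} \<times> {a, a + D})" by blast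
  moreover have "finite (PiE {1..n} (\<lambda>i. {-M i..M i} \<times> {a, a + D}))" by (intro finite_PiE) auto
  ultimately show ?thesis using finite_subset by blast
qed

lemma same_state_Suc:
  assumes "\<forall>i\<in>{1..n}. q k i = q k' i \<and> dual k i = dual k' i"
  shows "\<forall>i\<in>{1..n}. q (Suc k) i = q (Suc k') i \<and> dual (Suc k) i = dual (Suc k') i"
proof -
  have nbr_eq: "(\<Sum>l\<in>nbr j. f l) = (\<Sum>l\<in>nbr j. g l)" if "\<forall>l\<in>{1..n}. f l = g l" for f g :: "nat \<Rightarrow> real" and j
    using that nbr_subset by (intro sum.cong) auto
  have "q (Suc k) j = q (Suc k') j" if "j \<in> {1..n}" for j
    using that assms nbr_eq[of "q k" "q k'" j] by (simp add: q_def primal_Suc)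
  then have "(\<Sum>j\<in>nbr i. q (Suc k) i - q (Suc k) j) = (\<Sum>j\<in>nbr i. q (Suc k') i - q (Suc k') j)"
    if "i \<in> {1..n}" for i
    using that nbr_subset[of i] by (intro sum.cong) auto
  with \<open>\<And>j. j \<in> {1..n} \<Longrightarrow> q (Suc k) j = q (Suc k') j\<close> show ?thesis
    using assms by (simp add: dual_Suc)
qed

lemma eventually_periodic:
  obtains K p where "0 < p" "\<forall>i\<in>{1..n}. q K i = q (K + p) i \<and> dual K i = dual (K + p) i"
proof -
  let ?st = "\<lambda>k. restrict (\<lambda>i. (dual_count k i, q k i)) {1..n}"
  have "\<not> inj ?st"
  proof
    assume "inj ?st"
    then show False using finite_imageD[OF finite_state_range] by simp
  qed
  then obtain k1 k2 where "k1 \<noteq> k2" "?st k1 = ?st k2" unfolding inj_def by blast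
  then obtain k k' where kk': "k < k'" "?st k = ?st k'"
    by (cases "k1 < k2") (auto simp: not_less_iff_gr_or_eq)
  have "q k i = q (k + (k' - k)) i \<and> dual k i = dual (k + (k' - k)) i" if "i \<in> {1..n}" for i
  proof -
    have "?st k i = ?st k' i" using kk'(2) by simp
    then show ?thesis using that kk'(1) by (simp add: dual_eq_dual_count)
  qed
  then show ?thesis using that[of "k' - k" k] kk'(1) by simp
qed

lemma q_periodic:
  assumes period: "\<forall>i\<in>{1..n}. q K i = q (K + p) i \<and> dual K i = dual (K + p) i"
    and "K \<le> k" "i \<in> {1..n}"
  shows "q (k + m * p) i = q k i"
proof -
  have shifted: "\<forall>i\<in>{1..n}. q (K + l) i = q (K + p + l) i \<and> dual (K + l) i = dual (K + p + l) i" for l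
  proof (induction l)
    case (Suc l)
    then show ?case using same_state_Suc[of "K + l" "K + p + l"] by simp
  qed (use period in simp)
  have step: "q (k' + p) i = q k' i" if "K \<le> k'" for k'
  proof -
    have "q (K + (k' - K)) i = q (K + p + (k' - K)) i" using shifted[of "k' - K"] assms(3) by blast
    then show ?thesis using that by (simp add: algebra_simps)
  qed
  show ?thesis
  proof (induction m)
    case (Suc m)
    have "q (k + Suc m * p) i = q (k + m * p + p) i" by (simp add: algebra_simps)
    also have "\<dots> = q (k + m * p) i" using step assms(2) by simp
    finally show ?case using Suc by simp
  qed simp
qed

lemma harmonic_imp_constant:
  assumes harmonic: "\<forall>i\<in>{1..n}. (\<Sum>j\<in>nbr i. w i - w j) = (0::real)"
  shows "\<exists>c. \<forall>i\<in>{1..n}. w i = c"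
proof -
  have "Max (w ` {1..n}) \<in> w ` {1..n}" using n_pos by (intro Max_in) auto
  then obtain i0 where i0: "i0 \<in> {1..n}" "w i0 = Max (w ` {1..n})" by (metis imageE)
  have i0_max: "w i \<le> w i0" if "i \<in> {1..n}" for i using that i0(2) by simp
  text \<open>At a maximum point all terms of the harmonic sum are nonnegative, hence zero, so the
    maximum propagates to the neighbours and, by connectivity, everywhere.\<close>
  have "E\<^sup>*\<^sup>* i0 j \<Longrightarrow> j \<in> {1..n} \<and> w j = w i0" for j
  proof (induction rule: rtranclp_induct)
    case (step y z)
    have z: "z \<in> {1..n}" using step(2) graph unfolding simple_graph_on_def by blast
    have zN: "z \<in> nbr y" using z step(2) unfolding nbr_def nbrs_def by blast
    have y: "y \<in> {1..n}" "w y = w i0" using step(3) by auto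
    have nonneg: "0 \<le> w y - w l" if "l \<in> nbr y" for l
      using that nbr_subset[of y] i0_max[of l] y(2) by auto
    have "(\<Sum>l\<in>nbr y. w y - w l) = 0" using harmonic y(1) by blast
    hence "w y - w z = 0"
      using sum_nonneg_eq_0_iff[OF finite_nbr[of y], of "\<lambda>l. w y - w l"] nonneg zN by blast
    then show ?case using z y(2) by simp
  qed (use i0 in simp)
  then show ?thesis using connected i0(1) unfolding connected_on_def by blast
qed

text \<open>Over one period the dual variables return, so the numbers of high steps per node form
  a harmonic, hence constant, function on the connected graph.\<close>
lemma high_count_constant:
  assumes period: "\<forall>i\<in>{1..n}. q K i = q (K + p) i \<and> dual K i = dual (K + p) i"
  shows "\<exists>c. \<forall>i\<in>{1..n}. (\<Sum>l<p. q (Suc (K + l)) i) = c"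
proof (rule harmonic_imp_constant, intro ballI)
  fix i assume i: "i \<in> {1..n}"
  have "dual (K + m) i = dual K i + \<rho> * (\<Sum>l<m. \<Sum>j\<in>nbr i. q (Suc (K + l)) i - q (Suc (K + l)) j)" for m
    by (induction m) (simp_all add: dual_Suc algebra_simps)
  from this[of p] have "\<rho> * (\<Sum>l<p. \<Sum>j\<in>nbr i. q (Suc (K + l)) i - q (Suc (K + l)) j) = 0"
    using period i by simp
  then have "(\<Sum>l<p. \<Sum>j\<in>nbr i. q (Suc (K + l)) i - q (Suc (K + l)) j) = 0"
    using rho_pos by simp
  moreover have "(\<Sum>j\<in>nbr i. (\<Sum>l<p. q (Suc (K + l)) i) - (\<Sum>l<p. q (Suc (K + l)) j))
      = (\<Sum>j\<in>nbr i. \<Sum>l<p. q (Suc (K + l)) i - q (Suc (K + l)) j)"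
    by (simp only: sum_subtractf)
  moreover have "\<dots> = (\<Sum>l<p. \<Sum>j\<in>nbr i. q (Suc (K + l)) i - q (Suc (K + l)) j)"
    by (rule sum.swap)
  ultimately show "(\<Sum>j\<in>nbr i. (\<Sum>l<p. q (Suc (K + l)) i) - (\<Sum>l<p. q (Suc (K + l)) j)) = 0"
    by simp
qed

lemma converges_at_iff: "bq_converges_at n E a D d \<rho> r c \<longleftrightarrow> (\<exists>k0. \<forall>k\<ge>k0. \<forall>i\<in>{1..n}. q k i = c)"
  by (simp add: bq_converges_at_def q_def primal_def)

lemma not_converges_at_both: "\<not> (bq_converges_at n E a D d \<rho> r a \<and> bq_converges_at n E a D d \<rho> r (a + D))"
proof
  assume "bq_converges_at n E a D d \<rho> r a \<and> bq_converges_at n E a D d \<rho> r (a + D)"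
  then obtain k1 k2 where low: "\<forall>k\<ge>k1. \<forall>i\<in>{1..n}. q k i = a"
      and high: "\<forall>k\<ge>k2. \<forall>i\<in>{1..n}. q k i = a + D"
    unfolding converges_at_iff by blast
  have one: "(1::nat) \<in> {1..n}" using n_pos by simp
  have "q (max k1 k2) 1 = a" using low one by simp
  moreover have "q (max k1 k2) 1 = a + D" using high one by simp
  ultimately show False using D_pos by simp
qed

lemma sum_le_if_converges_low:
  assumes "bq_converges_at n E a D d \<rho> r a"
  shows "(\<Sum>i\<in>{1..n}. r i) \<le> real n * thr + 2 * \<rho> * D * (real n)\<^sup>2"
proof -
  obtain k0 where k0: "\<forall>k\<ge>k0. \<forall>i\<in>{1..n}. q k i = a" using assms converges_at_iff by blast
  have "gap k0 i \<le> 2 * \<rho> * n * D" if "i \<in> {1..n}" for i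
  proof -
    have "gap k0 i \<le> 2 * \<rho> * deg i * (D - d)" using gap_le_if_low k0 that by simp
    also have "\<dots> \<le> 2 * \<rho> * n * D"
      using rho_pos deg_le[of i] deg_nonneg[of i] d_pos d_less_D by (intro mult_mono) auto
    finally show ?thesis .
  qed
  hence "(\<Sum>i\<in>{1..n}. gap k0 i) \<le> (\<Sum>i\<in>{1..n}. 2 * \<rho> * n * D)" by (intro sum_mono) auto
  also have "\<dots> = 2 * \<rho> * D * (real n)\<^sup>2" by (simp add: power2_eq_square)
  finally show ?thesis using sum_gap[of k0] by simp
qed

lemma converges_low_if_period_low:
  assumes p: "0 < p" and period: "\<forall>i\<in>{1..n}. q K i = q (K + p) i \<and> dual K i = dual (K + p) i"
    and low: "\<And>i l. i \<in> {1..n} \<Longrightarrow> l < p \<Longrightarrow> q (Suc (K + l)) i = a"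
  shows "bq_converges_at n E a D d \<rho> r a"
proof -
  have "q k i = a" if "Suc K \<le> k" "i \<in> {1..n}" for k i
  proof -
    define l where "l = (k - Suc K) mod p"
    have "(k - Suc K) mod p + (k - Suc K) div p * p = k - Suc K" by (rule mod_div_mult_eq)
    then have k_eq: "Suc (K + l) + ((k - Suc K) div p) * p = k" using that(1) unfolding l_def by linarith
    have "q k i = q (Suc (K + l)) i"
      using q_periodic[OF period _ that(2), of "Suc (K + l)" "(k - Suc K) div p"] by (simp only: k_eq)
    also have "\<dots> = a" using low[OF that(2)] p by (simp add: l_def)
    finally show ?thesis .
  qed
  then show ?thesis unfolding converges_at_iff by blast
qed

text \<open>Within a period either no node is ever high, and the iteration is low from then on, or
  (counts being equal) every node is high at some step, and then all gaps end above
  \<open>- 3 \<rho> n D\<close>, which is impossible for a small sum of the data.\<close>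
lemma converges_low_if_sum_lt:
  assumes less: "(\<Sum>i\<in>{1..n}. r i) < real n * thr - 3 * \<rho> * D * (real n)\<^sup>2"
  shows "bq_converges_at n E a D d \<rho> r a"
proof -
  obtain K p where p: "0 < p" and period: "\<forall>i\<in>{1..n}. q K i = q (K + p) i \<and> dual K i = dual (K + p) i"
    by (rule eventually_periodic)
  obtain c where c: "\<forall>i\<in>{1..n}. (\<Sum>l<p. q (Suc (K + l)) i) = c"
    using high_count_constant[OF period] by blast
  show ?thesis
  proof (cases "c = real p * a")
    case True
    show ?thesis
    proof (rule converges_low_if_period_low[OF p period])
      fix i l assume "i \<in> {1..n}" "l < p"
      have "(\<Sum>l<p. q (Suc (K + l)) i - a) = 0" using True c \<open>i \<in> {1..n}\<close> by (simp add: sum_subtractf)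
      then show "q (Suc (K + l)) i = a"
        using \<open>l < p\<close> q_ge sum_nonneg_eq_0_iff[of "{..<p}" "\<lambda>l. q (Suc (K + l)) i - a"] by simp
    qed
  next
    case False
    have "- 3 * \<rho> * n * D < gap (K + p) i" if i: "i \<in> {1..n}" for i
    proof -
      have "(\<Sum>l<p. q (Suc (K + l)) i - a) \<noteq> 0" using False c i by (simp add: sum_subtractf)
      then obtain l where "l < p" "q (Suc (K + l)) i - a \<noteq> 0" by (meson lessThan_iff sum.neutral)
      then have l: "l < p" "q (Suc (K + l)) i = a + D" using q_cases[of "Suc (K + l)" i] by auto
      have "Suc (K + l) + (p - 1 - l) = K + p" using l(1) by simp
      then show ?thesis using gap_stays_above[OF l(2), of "p - 1 - l"] by simp
    qed
    hence "(\<Sum>i\<in>{1..n}. - 3 * \<rho> * n * D) < (\<Sum>i\<in>{1..n}. gap (K + p) i)"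
      using n_pos by (intro sum_strict_mono) auto
    then show ?thesis using sum_gap[of "K + p"] less by (simp add: power2_eq_square algebra_simps)
  qed
qed

end

section \<open>Measurability and Chernoff bounds on product spaces\<close>

lemma quant_measurable [measurable]:
  "g \<in> borel_measurable M \<Longrightarrow> (\<lambda>y. quant a D d (g y)) \<in> borel_measurable M"
  unfolding quant_def by measurable

lemma measurable_PiM_component_comp:
  assumes [measurable]: "f \<in> borel_measurable M"
  shows "(\<lambda>y. f (y i)) \<in> borel_measurable (PiM {1..n} (\<lambda>_. M))"
proof (cases "i \<in> {1..n}")
  case False
  text \<open>Outside the index set every point of the product space takes the value \<open>undefined\<close>.\<close>
  have "(\<lambda>y. f (y i)) \<in> borel_measurable (PiM {1..n} (\<lambda>_. M))
      \<longleftrightarrow> (\<lambda>_. f undefined) \<in> borel_measurable (PiM {1..n} (\<lambda>_. M))"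
    by (rule measurable_cong) (use False in \<open>auto simp: space_PiM PiE_def extensional_def\<close>)
  then show ?thesis by simp
qed measurable

lemma measurable_bq_iter:
  assumes f [measurable]: "f \<in> borel_measurable M"
  shows "(\<lambda>y. fst (bq_iter n E a D d \<rho> (\<lambda>i. f (y i)) k) i) \<in> borel_measurable (PiM {1..n} (\<lambda>_. M))"
    and "(\<lambda>y. snd (bq_iter n E a D d \<rho> (\<lambda>i. f (y i)) k) i) \<in> borel_measurable (PiM {1..n} (\<lambda>_. M))"
proof -
  have "\<forall>i. (\<lambda>y. fst (bq_iter n E a D d \<rho> (\<lambda>i. f (y i)) k) i) \<in> borel_measurable (PiM {1..n} (\<lambda>_. M))
         \<and> (\<lambda>y. snd (bq_iter n E a D d \<rho> (\<lambda>i. f (y i)) k) i) \<in> borel_measurable (PiM {1..n} (\<lambda>_. M))"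
  proof (induction k)
    case 0 then show ?case by (simp add: bq_iter_def)
  next
    case (Suc k)
    have [measurable]: "(\<lambda>y. fst (bq_iter n E a D d \<rho> (\<lambda>i. f (y i)) k) i) \<in> borel_measurable (PiM {1..n} (\<lambda>_. M))"
      "(\<lambda>y. snd (bq_iter n E a D d \<rho> (\<lambda>i. f (y i)) k) i) \<in> borel_measurable (PiM {1..n} (\<lambda>_. M))"
      "(\<lambda>y. f (y i)) \<in> borel_measurable (PiM {1..n} (\<lambda>_. M))" for i
      using Suc measurable_PiM_component_comp[OF f] by blast+
    have fst_step: "fst (bq_step n E a D d \<rho> r s) i =
       (\<rho> * real (card (nbrs n E i)) * quant a D d (fst s i) + \<rho> * (\<Sum>j\<in>nbrs n E i. quant a D d (fst s j))
         - snd s i + r i) / (1 + 2 * \<rho> * real (card (nbrs n E i)))" for r s i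
      by (simp add: bq_step_def Let_def)
    have snd_step: "snd (bq_step n E a D d \<rho> r s) i =
       snd s i + \<rho> * (real (card (nbrs n E i)) * quant a D d (fst (bq_step n E a D d \<rho> r s) i)
         - (\<Sum>j\<in>nbrs n E i. quant a D d (fst (bq_step n E a D d \<rho> r s) j)))" for r s i
      by (simp add: bq_step_def Let_def)
    have fst_meas [measurable]: "(\<lambda>y. fst (bq_step n E a D d \<rho> (\<lambda>i. f (y i)) (bq_iter n E a D d \<rho> (\<lambda>i. f (y i)) k)) i)
        \<in> borel_measurable (PiM {1..n} (\<lambda>_. M))" for i
      unfolding fst_step by measurable
    have "(\<lambda>y. snd (bq_step n E a D d \<rho> (\<lambda>i. f (y i)) (bq_iter n E a D d \<rho> (\<lambda>i. f (y i)) k)) i)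
        \<in> borel_measurable (PiM {1..n} (\<lambda>_. M))" for i
      unfolding snd_step by measurable
    with fst_meas show ?case by (simp add: bq_iter_def)
  qed
  then show "(\<lambda>y. fst (bq_iter n E a D d \<rho> (\<lambda>i. f (y i)) k) i) \<in> borel_measurable (PiM {1..n} (\<lambda>_. M))"
    and "(\<lambda>y. snd (bq_iter n E a D d \<rho> (\<lambda>i. f (y i)) k) i) \<in> borel_measurable (PiM {1..n} (\<lambda>_. M))"
    by blast+
qed

lemma sets_bq_converges_at:
  assumes f [measurable]: "f \<in> borel_measurable M"
  shows "{y \<in> space (PiM {1..n} (\<lambda>_. M)). bq_converges_at n E a D d \<rho> (\<lambda>i. f (y i)) c}
    \<in> sets (PiM {1..n} (\<lambda>_. M))"
proof -
  note [measurable] = measurable_bq_iter(1)[OF f]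
  show ?thesis unfolding bq_converges_at_def by measurable
qed

lemma nn_integral_exp_sum_PiM:
  fixes Q :: "'a measure" and f :: "'a \<Rightarrow> real"
  assumes Q: "prob_space Q" and [measurable]: "f \<in> borel_measurable Q" and I: "finite I"
  shows "(\<integral>\<^sup>+y. ennreal (exp (\<mu> * (\<Sum>i\<in>I. f (y i)))) \<partial>PiM I (\<lambda>_. Q))
        = (\<integral>\<^sup>+x. ennreal (exp (\<mu> * f x)) \<partial>Q) ^ card I"
proof -
  interpret product_sigma_finite "\<lambda>_. Q"
    using Q by (simp add: product_sigma_finite_def prob_space_imp_sigma_finite)
  have "(\<integral>\<^sup>+y. ennreal (exp (\<mu> * (\<Sum>i\<in>I. f (y i)))) \<partial>PiM I (\<lambda>_. Q))
      = (\<integral>\<^sup>+y. (\<Prod>i\<in>I. ennreal (exp (\<mu> * f (y i)))) \<partial>PiM I (\<lambda>_. Q))"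
    by (rule nn_integral_cong) (simp add: sum_distrib_left exp_sum I prod_ennreal)
  also have "\<dots> = (\<Prod>i\<in>I. (\<integral>\<^sup>+x. ennreal (exp (\<mu> * f x)) \<partial>Q))"
    by (rule product_nn_integral_prod[OF I]) simp
  finally show ?thesis by simp
qed

lemma chernoff_PiM:
  fixes Q :: "'a measure" and f :: "'a \<Rightarrow> real"
  assumes Q: "prob_space Q" and f [measurable]: "f \<in> borel_measurable Q" and I: "finite I"
    and "0 \<le> l"
  shows "emeasure (PiM I (\<lambda>_. Q)) {y \<in> space (PiM I (\<lambda>_. Q)). c \<le> (\<Sum>i\<in>I. f (y i))}
     \<le> ennreal (exp (- l * c)) * (\<integral>\<^sup>+x. ennreal (exp (l * f x)) \<partial>Q) ^ card I"
proof -
  let ?P = "PiM I (\<lambda>_. Q)"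
  let ?A = "{y \<in> space ?P. c \<le> (\<Sum>i\<in>I. f (y i))}"
  have [measurable]: "?A \<in> sets ?P" by measurable
  have "emeasure ?P ?A = (\<integral>\<^sup>+y. indicator ?A y \<partial>?P)" by simp
  also have "\<dots> \<le> (\<integral>\<^sup>+y. ennreal (exp (- l * c)) * ennreal (exp (l * (\<Sum>i\<in>I. f (y i)))) \<partial>?P)"
  proof (rule nn_integral_mono)
    fix y assume "y \<in> space ?P"
    show "indicator ?A y \<le> ennreal (exp (- l * c)) * ennreal (exp (l * (\<Sum>i\<in>I. f (y i))))"
    proof (cases "y \<in> ?A")
      case True
      hence "0 \<le> l * ((\<Sum>i\<in>I. f (y i)) - c)" using \<open>0 \<le> l\<close> by simp
      hence "1 \<le> exp (- l * c) * exp (l * (\<Sum>i\<in>I. f (y i)))"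
        by (simp add: exp_add[symmetric] algebra_simps)
      thus ?thesis using True by (simp add: ennreal_mult[symmetric])
    qed simp
  qed
  also have "\<dots> = ennreal (exp (- l * c)) * (\<integral>\<^sup>+y. ennreal (exp (l * (\<Sum>i\<in>I. f (y i)))) \<partial>?P)"
    by (rule nn_integral_cmult) measurable
  also have "\<dots> = ennreal (exp (- l * c)) * (\<integral>\<^sup>+x. ennreal (exp (l * f x)) \<partial>Q) ^ card I"
    by (simp add: nn_integral_exp_sum_PiM[OF Q f I])
  finally show ?thesis .
qed

lemma ennreal_exp_le_window_plus_tails:
  fixes l s s' a b m S :: real
  assumes s: "0 \<le> s" "0 \<le> s'" and window: "a < S \<Longrightarrow> S \<le> b \<Longrightarrow> l * S \<le> m"
  shows "ennreal (exp (l * S)) \<le> ennreal (exp m) * of_bool (a < S \<and> S \<le> b)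
      + (ennreal (exp (- s * b)) * ennreal (exp ((l + s) * S))
      + ennreal (exp (s' * a)) * ennreal (exp ((l - s') * S)))"
proof -
  consider "a < S \<and> S \<le> b" | "b < S" | "S \<le> a" by force
  then show ?thesis
  proof cases
    case 1
    then have "ennreal (exp (l * S)) \<le> ennreal (exp m) * of_bool (a < S \<and> S \<le> b)"
      using window by simp
    then show ?thesis by (rule order_trans) (simp add: add_increasing2)
  next
    case 2
    have "s * b \<le> s * S" using 2 s by (intro mult_left_mono) auto
    hence "exp (l * S) \<le> exp (- s * b) * exp ((l + s) * S)"
      by (simp add: exp_add[symmetric] algebra_simps)
    hence "ennreal (exp (l * S)) \<le> ennreal (exp (- s * b)) * ennreal (exp ((l + s) * S))"
      by (simp add: ennreal_mult[symmetric])
    then show ?thesis by (rule order_trans) (simp add: add_increasing add_increasing2)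
  next
    case 3
    have "s' * S \<le> s' * a" using 3 s by (intro mult_left_mono) auto
    hence "exp (l * S) \<le> exp (s' * a) * exp ((l - s') * S)"
      by (simp add: exp_add[symmetric] algebra_simps)
    hence "ennreal (exp (l * S)) \<le> ennreal (exp (s' * a)) * ennreal (exp ((l - s') * S))"
      by (simp add: ennreal_mult[symmetric])
    then show ?thesis by (rule order_trans) (simp add: add_increasing)
  qed
qed

text \<open>The converse of the Chernoff bound, by exponential tilting: the tilted mass of a product
  space splits into a window \<open>n c1 < S \<le> n c2\<close> and two tails, each tail being bounded by a
  further tilt to the left or to the right.\<close>
lemma tilted_window_lower_bound_PiM:
  fixes Q :: "'a measure" and f :: "'a \<Rightarrow> real"
  assumes Q: "prob_space Q" and f [measurable]: "f \<in> borel_measurable Q" and I: "finite I"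
    and s: "0 \<le> s" "0 \<le> s'"
    and p0: "(\<integral>\<^sup>+x. ennreal (exp (l * f x)) \<partial>Q) = ennreal p0"
    and pp: "(\<integral>\<^sup>+x. ennreal (exp ((l + s) * f x)) \<partial>Q) = ennreal pp"
    and pm: "(\<integral>\<^sup>+x. ennreal (exp ((l - s') * f x)) \<partial>Q) = ennreal pm"
    and nonneg: "0 \<le> p0" "0 \<le> pp" "0 \<le> pm"
  defines "P \<equiv> PiM I (\<lambda>_. Q)" and "n \<equiv> card I"
  shows "p0 ^ n \<le> exp (n * max (l * c1) (l * c2)) *
           measure P {y \<in> space P. n * c1 < (\<Sum>i\<in>I. f (y i)) \<and> (\<Sum>i\<in>I. f (y i)) \<le> n * c2}
         + exp (- s * n * c2) * pp ^ n + exp (s' * n * c1) * pm ^ n"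
proof -
  interpret P: prob_space P unfolding P_def by (intro prob_space_PiM) (simp add: Q)
  let ?S = "\<lambda>y. (\<Sum>i\<in>I. f (y i))"
  let ?A = "{y \<in> space P. n * c1 < ?S y \<and> ?S y \<le> n * c2}"
  have [measurable]: "?A \<in> sets P" "?S \<in> borel_measurable P" unfolding P_def by measurable
  define mx where "mx = max (l * c1) (l * c2)"
  have window: "l * S \<le> n * mx" if "n * c1 < S" "S \<le> n * c2" for S
  proof (cases "0 \<le> l")
    case True
    hence "l * S \<le> l * (n * c2)" using that by (intro mult_left_mono) auto
    thus ?thesis unfolding mx_def by (simp add: algebra_simps max_mult_distrib_left)
  next
    case False
    hence "l * S \<le> l * (n * c1)" using that by (intro mult_left_mono_neg) auto
    thus ?thesis unfolding mx_def by (simp add: algebra_simps max_mult_distrib_left)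
  qed
  have "ennreal (p0 ^ n) = (\<integral>\<^sup>+y. ennreal (exp (l * ?S y)) \<partial>P)"
    using nn_integral_exp_sum_PiM[OF Q f I, of l] p0 nonneg by (simp add: P_def n_def ennreal_power)
  also have "\<dots> \<le> (\<integral>\<^sup>+y. ennreal (exp (n * mx)) * indicator ?A y
      + (ennreal (exp (- s * (n * c2))) * ennreal (exp ((l + s) * ?S y))
      + ennreal (exp (s' * (n * c1))) * ennreal (exp ((l - s') * ?S y))) \<partial>P)"
    using ennreal_exp_le_window_plus_tails[OF s window] by (intro nn_integral_mono) (simp add: indicator_def)
  also have "\<dots> = ennreal (exp (n * mx)) * emeasure P ?A
      + (ennreal (exp (- s * (n * c2))) * ennreal (pp ^ n) + ennreal (exp (s' * (n * c1))) * ennreal (pm ^ n))"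
    using nn_integral_exp_sum_PiM[OF Q f I, of "l + s"] nn_integral_exp_sum_PiM[OF Q f I, of "l - s'"]
      pp pm nonneg
    by (simp add: nn_integral_add nn_integral_cmult P_def n_def ennreal_power)
  also have "\<dots> = ennreal (exp (n * mx) * measure P ?A + exp (- s * n * c2) * pp ^ n + exp (s' * n * c1) * pm ^ n)"
    using nonneg by (simp add: P.emeasure_eq_measure ennreal_mult[symmetric] ennreal_plus[symmetric] mult.assoc
        del: ennreal_plus)
  finally show ?thesis unfolding mx_def
    using nonneg by (subst (asm) ennreal_le_iff) (auto intro!: add_nonneg_nonneg)
qed

lemma integral_le_nn_integral:
  assumes "integrable Q g"
  shows "ennreal (integral\<^sup>L Q g) \<le> (\<integral>\<^sup>+x. ennreal (g x) \<partial>Q)"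
proof -
  have g_pos: "integrable Q (\<lambda>x. max 0 (g x))" using assms by auto
  have "ennreal (integral\<^sup>L Q g) \<le> ennreal (integral\<^sup>L Q (\<lambda>x. max 0 (g x)))"
    by (intro ennreal_leI integral_mono[OF assms g_pos]) simp
  also have "\<dots> = (\<integral>\<^sup>+x. ennreal (max 0 (g x)) \<partial>Q)"
    by (rule nn_integral_eq_integral[OF g_pos, symmetric]) simp
  finally show ?thesis by (simp add: ennreal_max_0)
qed

text \<open>Jensen's inequality for \<open>exp\<close>, with the possibly infinite right-hand side taken as a
  nonnegative integral; it follows from the tangent line of \<open>exp\<close> at the mean.\<close>
lemma exp_integral_le_nn_integral_exp:
  assumes Q: "prob_space Q" and Y: "integrable Q Y"
  shows "ennreal (exp (integral\<^sup>L Q Y)) \<le> (\<integral>\<^sup>+x. ennreal (exp (Y x)) \<partial>Q)"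
proof -
  interpret prob_space Q by fact
  define m where "m = integral\<^sup>L Q Y"
  have "integral\<^sup>L Q (\<lambda>x. exp m * (1 + Y x - m)) = exp m"
    using Y by (simp add: m_def Bochner_Integration.integral_diff Bochner_Integration.integral_add prob_space)
  hence "ennreal (exp m) \<le> (\<integral>\<^sup>+x. ennreal (exp m * (1 + Y x - m)) \<partial>Q)"
    using integral_le_nn_integral[of Q "\<lambda>x. exp m * (1 + Y x - m)"] Y by simp
  also have "\<dots> \<le> (\<integral>\<^sup>+x. ennreal (exp (Y x)) \<partial>Q)"
  proof (intro nn_integral_mono ennreal_leI)
    fix x
    have "exp m * (1 + (Y x - m)) \<le> exp m * exp (Y x - m)"
      using exp_ge_add_one_self[of "Y x - m"] by (intro mult_left_mono) auto
    thus "exp m * (1 + Y x - m) \<le> exp (Y x)" by (simp add: exp_diff algebra_simps)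
  qed
  finally show ?thesis by (simp add: m_def)
qed

section \<open>Error exponents\<close>

lemma err_exp_nonneg: "0 \<le> p \<Longrightarrow> p \<le> 1 \<Longrightarrow> 0 \<le> err_exp n p"
  by (simp add: err_exp_def divide_nonpos_nonneg)

lemma liminf_err_exp_nonneg:
  assumes "\<And>n. 0 \<le> m n" "\<And>n. m n \<le> 1"
  shows "0 \<le> liminf (\<lambda>n. err_exp n (m n))"
proof -
  have "liminf (\<lambda>n. 0::ereal) \<le> liminf (\<lambda>n. err_exp n (m n))"
    by (intro Liminf_mono always_eventually allI err_exp_nonneg assms)
  thus ?thesis by (simp add: Liminf_const)
qed

lemma liminf_err_exp_ge:
  fixes m :: "nat \<Rightarrow> real" and c E p :: real
  assumes m_nonneg: "\<And>n. 0 \<le> m n" and p: "0 < p"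
    and bound: "eventually (\<lambda>n. m n \<le> exp (c - n * E) * p ^ n) sequentially"
  shows "ereal (E - ln p) \<le> liminf (\<lambda>n. err_exp n (m n))"
proof -
  define g where "g n = ereal (E - ln p - c / real n)" for n
  have "(\<lambda>n. E - ln p - c / real n) \<longlonglongrightarrow> E - ln p - 0"
    by (intro tendsto_intros tendsto_divide_0[OF tendsto_const] filterlim_real_sequentially)
  hence lim: "liminf g = ereal (E - ln p)"
    unfolding g_def by (intro lim_imp_Liminf) (simp_all add: tendsto_ereal)
  have "eventually (\<lambda>n. g n \<le> err_exp n (m n)) sequentially"
    using bound eventually_ge_at_top[of 1]
  proof eventually_elim
    case (elim n)
    show ?case
    proof (cases "m n = 0")
      case False
      hence "0 < m n" using m_nonneg[of n] by simp
      hence "ln (m n) \<le> ln (exp (c - n * E) * p ^ n)"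
        using elim(1) p by (subst ln_le_cancel_iff) auto
      also have "\<dots> = c - n * E + n * ln p" using p by (simp add: ln_mult ln_realpow)
      finally have "- (1 / real n) * (c - n * E + n * ln p) \<le> - (1 / real n) * ln (m n)"
        using elim(2) by (intro mult_left_mono_neg) auto
      also have "- (1 / real n) * (c - n * E + n * ln p) = E - ln p - c / real n"
        using elim(2) by (simp add: field_simps)
      finally show ?thesis using False by (simp add: err_exp_def g_def)
    qed (simp add: err_exp_def)
  qed
  then have "liminf g \<le> liminf (\<lambda>n. err_exp n (m n))" by (rule Liminf_mono)
  then show ?thesis using lim by simp
qed

lemma liminf_err_exp_le:
  fixes m :: "nat \<Rightarrow> real" and E p0 a1 a2 :: real
  assumes m_nonneg: "\<And>n. 0 \<le> m n" and p0: "0 < p0"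
    and a1: "0 \<le> a1" "a1 < p0" and a2: "0 \<le> a2" "a2 < p0"
    and bound: "eventually (\<lambda>n. p0 ^ n \<le> exp (n * E) * m n + a1 ^ n + a2 ^ n) sequentially"
  shows "liminf (\<lambda>n. err_exp n (m n)) \<le> ereal (E - ln p0)"
proof -
  have small: "eventually (\<lambda>n. a ^ n \<le> 1/4 * p0 ^ n) sequentially" if "0 \<le> a" "a < p0" for a
  proof -
    have "(\<lambda>n. (a / p0) ^ n) \<longlonglongrightarrow> 0" using that p0 by (intro LIMSEQ_power_zero) auto
    hence "eventually (\<lambda>n. (a / p0) ^ n < 1/4) sequentially" by (rule order_tendstoD(2)) simp
    thus ?thesis
    proof eventually_elim
      case (elim n)
      have "a ^ n = (a / p0) ^ n * p0 ^ n" using p0 by (simp add: power_divide)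
      also have "\<dots> \<le> 1/4 * p0 ^ n" using elim p0 by (intro mult_right_mono) auto
      finally show ?case .
    qed
  qed
  define g where "g n = ereal (E - ln p0 + ln 2 / real n)" for n
  have "(\<lambda>n. E - ln p0 + ln 2 / real n) \<longlonglongrightarrow> E - ln p0 + 0"
    by (intro tendsto_intros tendsto_divide_0[OF tendsto_const] filterlim_real_sequentially)
  hence lim: "liminf g = ereal (E - ln p0)"
    unfolding g_def by (intro lim_imp_Liminf) (simp_all add: tendsto_ereal)
  have "eventually (\<lambda>n. err_exp n (m n) \<le> g n) sequentially"
    using bound small[OF a1] small[OF a2] eventually_ge_at_top[of 1]
  proof eventually_elim
    case (elim n)
    have pn: "0 < p0 ^ n" using p0 by simp
    have big: "p0 ^ n / 2 \<le> exp (n * E) * m n" using elim(1-3) by simp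
    have mpos: "0 < m n"
    proof (rule ccontr)
      assume "\<not> 0 < m n"
      then have "m n = 0" using m_nonneg[of n] by simp
      then show False using big pn by simp
    qed
    have "p0 ^ n / 2 / exp (n * E) \<le> m n" using big by (simp add: pos_divide_le_eq mult.commute)
    hence "ln (p0 ^ n / 2 / exp (n * E)) \<le> ln (m n)"
      using pn mpos by (subst ln_le_cancel_iff) auto
    also have "ln (p0 ^ n / 2 / exp (n * E)) = n * ln p0 - ln 2 - n * E"
      using p0 by (simp add: ln_div ln_realpow ln_mult)
    finally have "- (1 / real n) * ln (m n) \<le> - (1 / real n) * (n * ln p0 - ln 2 - n * E)"
      using elim(4) by (intro mult_left_mono_neg) auto
    also have "\<dots> = E - ln p0 + ln 2 / real n" using elim(4) by (simp add: field_simps)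
    finally show ?case using mpos by (simp add: err_exp_def g_def)
  qed
  then have "liminf (\<lambda>n. err_exp n (m n)) \<le> liminf g" by (rule Liminf_mono)
  then show ?thesis using lim by simp
qed

lemma eventually_one_le_real_mult:
  assumes "0 < \<eta>"
  shows "eventually (\<lambda>n. 1 \<le> real n * \<eta>) sequentially"
  using eventually_ge_at_top[of "nat \<lceil>1 / \<eta>\<rceil>"]
proof eventually_elim
  case (elim n)
  have "1 / \<eta> \<le> real (nat \<lceil>1 / \<eta>\<rceil>)" by (rule real_nat_ceiling_ge)
  also have "\<dots> \<le> real n" using elim by simp
  finally show ?case using assms by (simp add: pos_divide_le_eq)
qed

text \<open>One-sided derivative of a moment generating function at \<open>0\<close>: it is the mean, so the
  function lies below any line of larger slope near \<open>0\<close>.\<close>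
lemma exp_moment_lt_near_zero:
  fixes Q :: "'b measure" and Y :: "'b \<Rightarrow> real"
  assumes Q: "prob_space Q" and Y [measurable]: "Y \<in> borel_measurable Q"
    and dominating: "integrable Q (\<lambda>x. \<bar>Y x\<bar> * (1 + exp (Y x)))"
    and mean: "integral\<^sup>L Q Y < c"
  shows "\<exists>\<nu>>0. \<nu> \<le> 1 \<and> (\<integral>x. exp (\<nu> * Y x) \<partial>Q) < 1 + c * \<nu>"
proof -
  interpret prob_space Q by fact
  define \<nu> where "\<nu> k = inverse (real (Suc k))" for k
  have \<nu>: "0 < \<nu> k" "\<nu> k \<le> 1" for k by (auto simp: \<nu>_def field_simps)
  define s where "s k x = (exp (\<nu> k * Y x) - 1) / \<nu> k" for k x
  have [measurable]: "s k \<in> borel_measurable Q" for k unfolding s_def by measurable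
  have bound: "norm (s k x) \<le> \<bar>Y x\<bar> * (1 + exp (Y x))" for k x
  proof -
    have "\<bar>exp (\<nu> k * Y x) - 1\<bar> \<le> \<nu> k * \<bar>Y x\<bar> * (1 + exp (Y x))"
      by (rule abs_exp_mult_minus_one_le) (use \<nu>[of k] in auto)
    thus ?thesis using \<nu>(1)[of k] by (simp add: s_def abs_divide pos_divide_le_eq mult_ac)
  qed
  have lim: "(\<lambda>k. s k x) \<longlonglongrightarrow> Y x" for x
  proof -
    let ?A = "(Y x)\<^sup>2 * (1 + exp \<bar>Y x\<bar>)"
    have bnd: "norm (s k x - Y x) \<le> \<nu> k * ?A" for k
      using exp_difference_quotient_le[OF \<nu>(1)[of k] \<nu>(2)[of k], of "Y x"] by (simp add: s_def)
    have to_0: "(\<lambda>k. \<nu> k * ?A) \<longlonglongrightarrow> 0"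
      unfolding \<nu>_def using tendsto_mult[OF LIMSEQ_inverse_real_of_nat tendsto_const, of ?A] by simp
    have "(\<lambda>k. s k x - Y x) \<longlonglongrightarrow> 0"
      by (rule Lim_null_comparison[OF always_eventually[OF allI[OF bnd]] to_0])
    thus ?thesis by (rule LIM_zero_cancel)
  qed
  have "(\<lambda>k. integral\<^sup>L Q (s k)) \<longlonglongrightarrow> integral\<^sup>L Q Y"
    by (rule integral_dominated_convergence[OF Y _ dominating]) (use lim bound in auto)
  from order_tendstoD(2)[OF this mean] obtain k where k: "integral\<^sup>L Q (s k) < c"
    by (auto simp: eventually_sequentially)
  have "integrable Q (s k)"
    by (rule integrable_dominated_convergence2[OF Y _ dominating]) (use lim bound in auto)
  have "(\<integral>x. exp (\<nu> k * Y x) \<partial>Q) = (\<integral>x. 1 + \<nu> k * s k x \<partial>Q)"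
    using \<nu>(1)[of k] by (intro Bochner_Integration.integral_cong) (auto simp: s_def)
  also have "\<dots> = 1 + \<nu> k * integral\<^sup>L Q (s k)"
    using \<open>integrable Q (s k)\<close> prob_space by simp
  also have "\<dots> < 1 + c * \<nu> k" using k \<nu>(1)[of k] by (simp add: mult.commute)
  finally show ?thesis using \<nu>[of k] by blast
qed

section \<open>The log-likelihood ratio and its moment generating function\<close>

lemma llr_measurable [measurable]: "llr M N \<in> borel_measurable N"
  unfolding llr_def by measurable

lemma RN_deriv_eq_exp_neg_llr:
  assumes P1: "prob_space M1" and P2: "prob_space M2" and sets: "sets M1 = sets M2"
    and ac12: "absolutely_continuous M1 M2" and ac21: "absolutely_continuous M2 M1"
  shows "AE x in M1. RN_deriv M1 M2 x = ennreal (exp (- llr M1 M2 x))"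
proof -
  interpret P1: prob_space M1 by fact
  interpret P2: prob_space M2 by fact
  let ?f = "RN_deriv M2 M1"
  have fm [measurable]: "?f \<in> borel_measurable M2" by simp
  have dens: "density M2 ?f = M1" using P2.density_RN_deriv[OF ac21] sets by simp
  have fin: "AE x in M2. ?f x \<noteq> \<infinity>"
    using P2.RN_deriv_finite[OF prob_space_imp_sigma_finite[OF P1] ac21] sets by simp
  have z: "{x \<in> space M2. ?f x = 0} \<in> sets M2" by measurable
  have "emeasure M1 {x \<in> space M2. ?f x = 0} = (\<integral>\<^sup>+x. ?f x * indicator {x \<in> space M2. ?f x = 0} x \<partial>M2)"
    by (subst dens[symmetric]) (rule emeasure_density[OF fm z])
  also have "\<dots> = 0" by (rule nn_integral_0_iff_AE[THEN iffD2]) (auto simp: indicator_def)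
  finally have "emeasure M2 {x \<in> space M2. ?f x = 0} = 0"
    using absolutely_continuousD[OF ac12] z sets by simp
  hence "AE x in M2. ?f x \<noteq> 0"
    using z by (subst AE_iff_measurable[OF z]) auto
  hence pos: "AE x in M2. 0 < enn2real (?f x)"
    using fin by eventually_elim (auto simp: enn2real_positive_iff less_top[symmetric] zero_less_iff_neq_zero)
  define h where "h x = ennreal (exp (- llr M1 M2 x))" for x
  have hm [measurable]: "h \<in> borel_measurable M2" unfolding h_def llr_def by measurable
  have hm1: "h \<in> borel_measurable M1" by (subst measurable_cong_sets[OF sets refl]) (rule hm)
  text \<open>\<open>h\<close> inverts the density \<open>dM1/dM2\<close>, so it is a density of \<open>M2\<close> w.r.t. \<open>M1\<close>.\<close>
  have "density M1 h = density (density M2 ?f) h" using dens by simp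
  also have "\<dots> = density M2 (\<lambda>x. ?f x * h x)"
    using hm by (intro density_density_eq) simp_all
  also have "\<dots> = density M2 (\<lambda>_. 1)"
  proof (rule density_cong)
    show "AE x in M2. ?f x * h x = 1"
      using pos fin
    proof eventually_elim
      case (elim x)
      have e: "?f x = ennreal (enn2real (?f x))" using elim(2) by (simp add: less_top)
      have "exp (- llr M1 M2 x) = 1 / enn2real (?f x)"
        using elim(1) by (simp add: llr_def exp_minus inverse_eq_divide)
      thus ?case using elim(1) by (subst e) (simp add: h_def ennreal_mult[symmetric])
    qed
  qed simp_all
  also have "\<dots> = M2" by (rule density_1)
  finally have "density M1 h = M2" .
  from P1.RN_deriv_unique[OF hm1 this] show ?thesis by (simp add: h_def eq_commute)
qed

locale mutually_ac =
  fixes M1 M2 :: "'a measure"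
  assumes P1: "prob_space M1" and P2: "prob_space M2" and sets12: "sets M1 = sets M2"
    and ac12: "absolutely_continuous M1 M2" and ac21: "absolutely_continuous M2 M1"
    and int1: "integrable M1 (llr M1 M2)" and int2: "integrable M2 (llr M2 M1)"
begin

sublocale p1: prob_space M1 by (rule P1)
sublocale p2: prob_space M2 by (rule P2)

definition "L = llr M1 M2"

text \<open>\<open>mgf l = exp (Lam M1 M2 l)\<close>. It is finite on \<open>[0, 1]\<close>, where \<open>log_mgf\<close> is the real-valued
  version of \<open>Lam\<close>; the exponents are attained by tilts in this interval.\<close>
definition "mgf l = (\<integral>\<^sup>+x. ennreal (exp (- l * L x)) \<partial>M1)"
definition "mgf_real l = enn2real (mgf l)"
definition "log_mgf l = ln (mgf_real l)"

lemma sets_M2_eq_sets_M1: "sets M2 = sets M1" using sets12 by simp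

lemma L_measurable_M2[measurable]: "L \<in> borel_measurable M2" unfolding L_def by (rule llr_measurable)
lemma L_measurable_M1[measurable]: "L \<in> borel_measurable M1"
  by (subst measurable_cong_sets[OF sets12 refl]) (rule L_measurable_M2)

lemma llr_M2_M1_measurable[measurable]: "llr M2 M1 \<in> borel_measurable M2"
  by (subst measurable_cong_sets[OF sets_M2_eq_sets_M1 refl]) (rule llr_measurable)

lemma RN_deriv_M1_M2: "AE x in M1. RN_deriv M1 M2 x = ennreal (exp (- L x))"
  unfolding L_def by (rule RN_deriv_eq_exp_neg_llr[OF P1 P2 sets12 ac12 ac21])

lemma nn_integral_M2_eq:
  assumes F[measurable]: "F \<in> borel_measurable M1"
  shows "(\<integral>\<^sup>+x. F x \<partial>M2) = (\<integral>\<^sup>+x. ennreal (exp (- L x)) * F x \<partial>M1)"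
proof -
  have "(\<integral>\<^sup>+x. F x \<partial>M2) = (\<integral>\<^sup>+x. RN_deriv M1 M2 x * F x \<partial>M1)"
    by (rule p1.RN_deriv_nn_integral[OF ac12 sets_M2_eq_sets_M1 F])
  also have "\<dots> = (\<integral>\<^sup>+x. ennreal (exp (- L x)) * F x \<partial>M1)"
    using RN_deriv_M1_M2 by (intro nn_integral_cong_AE) auto
  finally show ?thesis .
qed

lemma AE_llr_M2_M1: "AE x in M2. llr M2 M1 x = - L x"
proof -
  have "AE x in M2. RN_deriv M1 M2 x = ennreal (exp (- L x))"
    by (rule absolutely_continuous_AE[OF sets_M2_eq_sets_M1 ac12 RN_deriv_M1_M2])
  thus ?thesis by eventually_elim (simp add: llr_def)
qed

lemma integrable_L_M1: "integrable M1 L" using int1 by (simp add: L_def)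
lemma integrable_L_M2: "integrable M2 L"
proof -
  have "integrable M2 (\<lambda>x. - L x)"
    using int2 AE_llr_M2_M1 by (subst integrable_cong_AE[of _ _ "llr M2 M1"]) (auto simp: L_def)
  thus ?thesis by simp
qed
lemma integral_L_M1: "integral\<^sup>L M1 L = KL M1 M2" by (simp add: KL_def L_def)
lemma integral_L_M2: "integral\<^sup>L M2 L = - KL M2 M1"
proof -
  have "KL M2 M1 = integral\<^sup>L M2 (\<lambda>x. - L x)"
    unfolding KL_def using AE_llr_M2_M1 by (intro integral_cong_AE) (auto simp: L_def)
  thus ?thesis by simp
qed

lemma nn_integral_M2_exp_mult_L: "(\<integral>\<^sup>+x. ennreal (exp (\<mu> * L x)) \<partial>M2) = mgf (1 - \<mu>)"
proof -
  have "(\<integral>\<^sup>+x. ennreal (exp (\<mu> * L x)) \<partial>M2) = (\<integral>\<^sup>+x. ennreal (exp (- L x)) * ennreal (exp (\<mu> * L x)) \<partial>M1)"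
    by (rule nn_integral_M2_eq) measurable
  also have "\<dots> = mgf (1 - \<mu>)" unfolding mgf_def
    by (intro nn_integral_cong) (simp add: ennreal_mult[symmetric] exp_add[symmetric] algebra_simps)
  finally show ?thesis .
qed

lemma mgf_1: "mgf 1 = 1"
  using nn_integral_M2_exp_mult_L[of 0] p2.emeasure_space_1 by simp

lemma mgf_0: "mgf 0 = 1" using p1.emeasure_space_1 by (simp add: mgf_def)

lemma integrable_exp_neg_L: "integrable M1 (\<lambda>x. exp (- L x))"
  using mgf_1 by (intro integrableI_nn_integral_finite[where x=1]) (auto simp: mgf_def)

lemma mgf_le_2: "0 \<le> l \<Longrightarrow> l \<le> 1 \<Longrightarrow> mgf l \<le> 2"
proof -
  assume l_range: "0 \<le> l" "l \<le> 1"
  have "mgf l \<le> (\<integral>\<^sup>+x. ennreal 1 + ennreal (exp (- L x)) \<partial>M1)"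
    unfolding mgf_def
  proof (intro nn_integral_mono)
    fix x have "exp (l * (- L x)) \<le> 1 + exp (- L x)" by (rule exp_mult_le_one_plus_exp[OF l_range])
    hence "ennreal (exp (- l * L x)) \<le> ennreal (1 + exp (- L x))" by (intro ennreal_leI) simp
    thus "ennreal (exp (- l * L x)) \<le> ennreal 1 + ennreal (exp (- L x))"
      by (simp add: ennreal_plus)
  qed
  also have "\<dots> = 2" using mgf_1 p1.emeasure_space_1
    by (simp add: nn_integral_add mgf_def one_add_one[symmetric] del: one_add_one)
  finally show ?thesis .
qed

lemma integrable_exp_mult_L: "0 \<le> l \<Longrightarrow> l \<le> 1 \<Longrightarrow> integrable M1 (\<lambda>x. exp (- l * L x))"
proof -
  assume l_range: "0 \<le> l" "l \<le> 1"
  show ?thesis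
  proof (rule Bochner_Integration.integrable_bound[where f="\<lambda>x. 1 + exp (- L x)"])
    show "integrable M1 (\<lambda>x. 1 + exp (- L x))" using integrable_exp_neg_L by simp
    show "AE x in M1. norm (exp (- l * L x)) \<le> norm (1 + exp (- L x))"
      using exp_mult_le_one_plus_exp[OF l_range, of "- L _"] by (auto intro!: AE_I2 simp: add_pos_pos)
  qed measurable
qed

lemma mgf_real_eq_integral: "0 \<le> l \<Longrightarrow> l \<le> 1 \<Longrightarrow> mgf_real l = (\<integral>x. exp (- l * L x) \<partial>M1)"
  unfolding mgf_real_def mgf_def by (subst integral_eq_nn_integral) auto

lemma mgf_pos: "0 < mgf l"
proof -
  have "mgf l \<noteq> 0"
  proof
    assume "mgf l = 0"
    hence "AE x in M1. ennreal (exp (- l * L x)) = 0"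
      unfolding mgf_def by (subst (asm) nn_integral_0_iff_AE) auto
    hence "AE x in M1. False" by simp
    thus False by simp
  qed
  thus ?thesis by (simp add: zero_less_iff_neq_zero)
qed

lemma mgf_eq_ennreal: "0 \<le> l \<Longrightarrow> l \<le> 1 \<Longrightarrow> mgf l = ennreal (mgf_real l)"
proof -
  assume "0 \<le> l" "l \<le> 1"
  hence "mgf l \<le> 2" by (rule mgf_le_2)
  hence "mgf l \<noteq> \<top>" using ennreal_numeral_less_top[of "num.Bit0 num.One"] by (auto simp: top_unique)
  thus ?thesis unfolding mgf_real_def by (simp add: ennreal_enn2real_if)
qed

lemma mgf_real_pos: "0 \<le> l \<Longrightarrow> l \<le> 1 \<Longrightarrow> 0 < mgf_real l"
  using mgf_pos[of l] mgf_eq_ennreal[of l] by simp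

lemma mgf_real_1: "mgf_real 1 = 1" and mgf_real_0: "mgf_real 0 = 1"
  by (simp_all add: mgf_real_def mgf_1 mgf_0)

lemma integrable_abs_L_M1: "integrable M1 (\<lambda>x. \<bar>L x\<bar>)" using integrable_L_M1 by simp
lemma integrable_abs_L_M2: "integrable M2 (\<lambda>x. \<bar>L x\<bar>)" using integrable_L_M2 by simp

lemma integrable_abs_L_exp_neg_L: "integrable M1 (\<lambda>x. \<bar>L x\<bar> * exp (- L x))"
proof (rule integrableI_nonneg)
  have "(\<integral>\<^sup>+x. ennreal (\<bar>L x\<bar> * exp (- L x)) \<partial>M1) = (\<integral>\<^sup>+x. ennreal (exp (- L x)) * ennreal \<bar>L x\<bar> \<partial>M1)"
    by (intro nn_integral_cong) (simp add: ennreal_mult[symmetric] mult.commute)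
  also have "\<dots> = (\<integral>\<^sup>+x. ennreal \<bar>L x\<bar> \<partial>M2)" by (rule nn_integral_M2_eq[symmetric]) measurable
  also have "\<dots> = ennreal (\<integral>x. \<bar>L x\<bar> \<partial>M2)" by (rule nn_integral_eq_integral[OF integrable_abs_L_M2]) auto
  finally show "(\<integral>\<^sup>+x. ennreal (\<bar>L x\<bar> * exp (- L x)) \<partial>M1) < \<infinity>" by simp
qed auto

lemma integrable_abs_L_exp_L: "integrable M2 (\<lambda>x. \<bar>L x\<bar> * exp (L x))"
proof (rule integrableI_nonneg)
  have "(\<integral>\<^sup>+x. ennreal (\<bar>L x\<bar> * exp (L x)) \<partial>M2) = (\<integral>\<^sup>+x. ennreal (exp (- L x)) * ennreal (\<bar>L x\<bar> * exp (L x)) \<partial>M1)"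
    by (rule nn_integral_M2_eq) measurable
  also have "\<dots> = (\<integral>\<^sup>+x. ennreal \<bar>L x\<bar> \<partial>M1)"
    by (intro nn_integral_cong) (simp add: ennreal_mult[symmetric] exp_minus field_simps)
  also have "\<dots> = ennreal (\<integral>x. \<bar>L x\<bar> \<partial>M1)" by (rule nn_integral_eq_integral[OF integrable_abs_L_M1]) auto
  finally show "(\<integral>\<^sup>+x. ennreal (\<bar>L x\<bar> * exp (L x)) \<partial>M2) < \<infinity>" by simp
qed auto

definition "lip_const = (\<integral>x. \<bar>L x\<bar> * (1 + exp (- L x)) \<partial>M1)"

lemma integrable_lip_bound: "integrable M1 (\<lambda>x. \<bar>L x\<bar> * (1 + exp (- L x)))"
  using integrable_abs_L_M1 integrable_abs_L_exp_neg_L by (simp add: distrib_left)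

lemma lip_const_nonneg: "0 \<le> lip_const" unfolding lip_const_def by (rule integral_nonneg_AE) auto

lemma mgf_real_lipschitz:
  assumes "0 \<le> a" "a \<le> 1" "0 \<le> b" "b \<le> 1"
  shows "\<bar>mgf_real a - mgf_real b\<bar> \<le> lip_const * \<bar>a - b\<bar>"
proof -
  have i1: "integrable M1 (\<lambda>x. exp (- a * L x))" using integrable_exp_mult_L assms by auto
  have i2: "integrable M1 (\<lambda>x. exp (- b * L x))" using integrable_exp_mult_L assms by auto
  have "mgf_real a - mgf_real b = (\<integral>x. exp (- a * L x) - exp (- b * L x) \<partial>M1)"
    using Bochner_Integration.integral_diff[OF i1 i2] mgf_real_eq_integral[of a] mgf_real_eq_integral[of b] assms by simp
  also have "\<bar>\<dots>\<bar> \<le> (\<integral>x. \<bar>a - b\<bar> * (\<bar>L x\<bar> * (1 + exp (- L x))) \<partial>M1)"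
  proof -
    have pw: "\<bar>exp (- a * L x) - exp (- b * L x)\<bar> \<le> \<bar>a - b\<bar> * (\<bar>L x\<bar> * (1 + exp (- L x)))" for x
    proof -
      have "\<bar>exp (- a * L x) - exp (- b * L x)\<bar> \<le> \<bar>- a * L x - - b * L x\<bar> * max (exp (- a * L x)) (exp (- b * L x))"
        by (rule abs_exp_diff_le)
      also have "\<dots> \<le> \<bar>a - b\<bar> * \<bar>L x\<bar> * (1 + exp (- L x))"
      proof -
        have "exp (a * (- L x)) \<le> 1 + exp (- L x)" "exp (b * (- L x)) \<le> 1 + exp (- L x)"
          using exp_mult_le_one_plus_exp[of a "- L x"] exp_mult_le_one_plus_exp[of b "- L x"] assms by auto
        hence m: "max (exp (- a * L x)) (exp (- b * L x)) \<le> 1 + exp (- L x)" by simp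
        have "\<bar>- a * L x - - b * L x\<bar> = \<bar>a - b\<bar> * \<bar>L x\<bar>" by (simp add: abs_mult[symmetric] algebra_simps)
        thus ?thesis using mult_left_mono[OF m, of "\<bar>a - b\<bar> * \<bar>L x\<bar>"] by simp
      qed
      finally show ?thesis by (simp add: mult.assoc)
    qed
    have "norm (\<integral>x. exp (- a * L x) - exp (- b * L x) \<partial>M1) \<le> (\<integral>x. norm (exp (- a * L x) - exp (- b * L x)) \<partial>M1)"
      by (rule integral_norm_bound)
    also have "\<dots> \<le> (\<integral>x. \<bar>a - b\<bar> * (\<bar>L x\<bar> * (1 + exp (- L x))) \<partial>M1)"
      by (rule integral_mono) (use i1 i2 integrable_lip_bound pw in auto)
    finally show ?thesis by simp
  qed
  also have "\<dots> = lip_const * \<bar>a - b\<bar>" by (simp add: lip_const_def mult.commute)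
  finally show ?thesis .
qed

lemma continuous_on_mgf_real: "continuous_on {0..1} mgf_real"
proof (rule lipschitz_on_continuous_on)
  show "lip_const-lipschitz_on {0..1} mgf_real"
    using mgf_real_lipschitz lip_const_nonneg by (auto simp: lipschitz_on_def dist_real_def)
qed

lemma continuous_on_log_mgf: "continuous_on {0..1} log_mgf"
  unfolding log_mgf_def by (intro continuous_intros continuous_on_mgf_real) (use mgf_real_pos in fastforce)

lemma log_mgf_0: "log_mgf 0 = 0" and log_mgf_1: "log_mgf 1 = 0" by (simp_all add: log_mgf_def mgf_real_0 mgf_real_1)

lemma exp_log_mgf: "0 \<le> l \<Longrightarrow> l \<le> 1 \<Longrightarrow> exp (log_mgf l) = mgf_real l"
  by (simp add: log_mgf_def mgf_real_pos)

lemma log_mgf_below_line_at_0: assumes "- KL M1 M2 < c" shows "\<exists>\<nu>>0. \<nu> \<le> 1 \<and> log_mgf \<nu> < c * \<nu>"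
proof -
  have "\<exists>\<nu>>0. \<nu> \<le> 1 \<and> (\<integral>x. exp (\<nu> * (- L x)) \<partial>M1) < 1 + c * \<nu>"
  proof (rule exp_moment_lt_near_zero[OF P1])
    show "integrable M1 (\<lambda>x. \<bar>- L x\<bar> * (1 + exp (- L x)))" using integrable_lip_bound by simp
    show "integral\<^sup>L M1 (\<lambda>x. - L x) < c" using assms integral_L_M1 by simp
  qed measurable
  then obtain \<nu> where n: "\<nu> > 0" "\<nu> \<le> 1" "(\<integral>x. exp (\<nu> * (- L x)) \<partial>M1) < 1 + c * \<nu>" by blast
  have "mgf_real \<nu> < 1 + c * \<nu>" using n by (simp add: mgf_real_eq_integral)
  moreover have "log_mgf \<nu> \<le> mgf_real \<nu> - 1" unfolding log_mgf_def by (rule ln_le_minus_one) (use n mgf_real_pos in auto)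
  ultimately show ?thesis using n by (intro exI[of _ \<nu>]) auto
qed

lemma log_mgf_below_line_at_1: assumes "c < KL M2 M1" shows "\<exists>\<nu>>0. \<nu> \<le> 1 \<and> log_mgf (1 - \<nu>) < - c * \<nu>"
proof -
  have "\<exists>\<nu>>0. \<nu> \<le> 1 \<and> (\<integral>x. exp (\<nu> * L x) \<partial>M2) < 1 + (- c) * \<nu>"
  proof (rule exp_moment_lt_near_zero[OF P2 L_measurable_M2])
    show "integrable M2 (\<lambda>x. \<bar>L x\<bar> * (1 + exp (L x)))" using integrable_abs_L_M2 integrable_abs_L_exp_L by (simp add: distrib_left)
    show "integral\<^sup>L M2 L < - c" using assms integral_L_M2 by simp
  qed
  then obtain \<nu> where n: "\<nu> > 0" "\<nu> \<le> 1" "(\<integral>x. exp (\<nu> * L x) \<partial>M2) < 1 + (- c) * \<nu>" by blast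
  have "mgf_real (1 - \<nu>) = (\<integral>x. exp (\<nu> * L x) \<partial>M2)"
    unfolding mgf_real_def nn_integral_M2_exp_mult_L[symmetric] by (subst integral_eq_nn_integral) auto
  hence "mgf_real (1 - \<nu>) < 1 - c * \<nu>" using n by simp
  moreover have "log_mgf (1 - \<nu>) \<le> mgf_real (1 - \<nu>) - 1" unfolding log_mgf_def by (rule ln_le_minus_one) (use n mgf_real_pos in auto)
  ultimately show ?thesis using n by (intro exI[of _ \<nu>]) auto
qed

lemma mgf_second_difference_le:
  assumes e: "0 < \<epsilon>" and h: "0 \<le> h" and lo: "\<epsilon> \<le> \<mu> - h" and hi: "\<mu> + h \<le> 1 - \<epsilon>"
  shows "mgf_real (\<mu> + h) + mgf_real (\<mu> - h) \<le> 2 * mgf_real \<mu> + h\<^sup>2 * (8 / \<epsilon>\<^sup>2) * 2"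
proof -
  define C where "C = h\<^sup>2 * (8 / \<epsilon>\<^sup>2)"
  have r: "0 \<le> \<mu> - h" "\<mu> + h \<le> 1" "0 \<le> \<mu>" "\<mu> \<le> 1" "0 \<le> \<mu> + h" "\<mu> - h \<le> 1" using e h lo hi by auto
  have pw: "exp (- (\<mu> + h) * L x) + exp (- (\<mu> - h) * L x) \<le> 2 * exp (- \<mu> * L x) + C * (1 + exp (- L x))" for x
    unfolding C_def by (rule exp_second_difference_le[OF e h lo hi])
  have i1: "integrable M1 (\<lambda>x. exp (- (\<mu> + h) * L x))" by (rule integrable_exp_mult_L) (use r in auto)
  have i2: "integrable M1 (\<lambda>x. exp (- (\<mu> - h) * L x))" by (rule integrable_exp_mult_L) (use r in auto)
  have i3: "integrable M1 (\<lambda>x. exp (- \<mu> * L x))" by (rule integrable_exp_mult_L) (use r in auto)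
  have i4: "integrable M1 (\<lambda>x. 1 + exp (- L x))" using integrable_exp_neg_L by simp
  have "mgf_real (\<mu> + h) + mgf_real (\<mu> - h) = (\<integral>x. exp (- (\<mu> + h) * L x) + exp (- (\<mu> - h) * L x) \<partial>M1)"
    using mgf_real_eq_integral[of "\<mu> + h"] mgf_real_eq_integral[of "\<mu> - h"] r Bochner_Integration.integral_add[OF i1 i2] by simp
  also have "\<dots> \<le> (\<integral>x. 2 * exp (- \<mu> * L x) + C * (1 + exp (- L x)) \<partial>M1)"
    by (rule integral_mono) (use i1 i2 i3 i4 pw in auto)
  also have "\<dots> = 2 * mgf_real \<mu> + C * (1 + mgf_real 1)"
  proof -
    have "(\<integral>x. 2 * exp (- \<mu> * L x) + C * (1 + exp (- L x)) \<partial>M1)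
        = (\<integral>x. 2 * exp (- \<mu> * L x) \<partial>M1) + (\<integral>x. C * (1 + exp (- L x)) \<partial>M1)"
      by (rule Bochner_Integration.integral_add) (use i3 i4 in auto)
    also have "(\<integral>x. C * (1 + exp (- L x)) \<partial>M1) = C * ((\<integral>x. 1 \<partial>M1) + (\<integral>x. exp (- L x) \<partial>M1))"
      using Bochner_Integration.integral_add[of M1 "\<lambda>_. 1" "\<lambda>x. exp (- L x)"] integrable_exp_neg_L by simp
    finally show ?thesis using mgf_real_eq_integral[of \<mu>] mgf_real_eq_integral[of 1] r p1.prob_space by simp
  qed
  finally show ?thesis by (simp add: mgf_real_1 C_def)
qed

lemma exists_interior_argmax:
  assumes "- KL M1 M2 < c" "c < KL M2 M1"
  shows "\<exists>\<mu>. 0 < \<mu> \<and> \<mu> < 1 \<and> (\<forall>y\<in>{0..1}. c * y - log_mgf y \<le> c * \<mu> - log_mgf \<mu>)"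
proof -
  have "\<exists>\<mu>\<in>{0..1}. \<forall>y\<in>{0..1}. c * y - log_mgf y \<le> c * \<mu> - log_mgf \<mu>"
    by (rule continuous_attains_sup) (auto intro!: continuous_intros continuous_on_log_mgf)
  then obtain \<mu> where m: "\<mu> \<in> {0..1}" "\<forall>y\<in>{0..1}. c * y - log_mgf y \<le> c * \<mu> - log_mgf \<mu>" by blast
  have "\<mu> \<noteq> 0"
  proof
    assume "\<mu> = 0"
    obtain \<nu> where n: "\<nu> > 0" "\<nu> \<le> 1" "log_mgf \<nu> < c * \<nu>" using log_mgf_below_line_at_0[OF assms(1)] by blast
    have "c * \<nu> - log_mgf \<nu> \<le> c * 0 - log_mgf 0" using m(2) n \<open>\<mu> = 0\<close> by auto
    thus False using n log_mgf_0 by simp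
  qed
  moreover have "\<mu> \<noteq> 1"
  proof
    assume "\<mu> = 1"
    obtain \<nu> where n: "\<nu> > 0" "\<nu> \<le> 1" "log_mgf (1 - \<nu>) < - c * \<nu>" using log_mgf_below_line_at_1[OF assms(2)] by blast
    have "c * (1 - \<nu>) - log_mgf (1 - \<nu>) \<le> c * 1 - log_mgf 1" using m(2) n \<open>\<mu> = 1\<close> by auto
    thus False using n log_mgf_1 by (simp add: algebra_simps)
  qed
  ultimately show ?thesis using m by (intro exI[of _ \<mu>]) auto
qed

text \<open>The function \<open>log_mgf\<close> has no corner: a point cannot maximize \<open>A y - log_mgf y\<close> and
  \<open>B y - log_mgf y\<close> for \<open>A < B\<close> simultaneously, because the second difference of \<open>mgf_real\<close>
  is \<open>O(h\<^sup>2)\<close> while a corner would force it to be of order \<open>h\<close>.\<close>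
lemma no_common_argmax:
  assumes AB: "A < B" and \<mu>: "0 < \<mu>" "\<mu> < 1"
    and maxA: "\<forall>y\<in>{0..1}. A * y - log_mgf y \<le> A * \<mu> - log_mgf \<mu>"
    and maxB: "\<forall>y\<in>{0..1}. B * y - log_mgf y \<le> B * \<mu> - log_mgf \<mu>"
  shows False
proof -
  define \<epsilon> where "\<epsilon> = min \<mu> (1 - \<mu>) / 2"
  have e: "0 < \<epsilon>" "2 * \<epsilon> \<le> \<mu>" "2 * \<epsilon> \<le> 1 - \<mu>" using \<mu> by (auto simp: \<epsilon>_def)
  define K where "K = (8 / \<epsilon>\<^sup>2) * 2"
  have Kp: "0 < K" using e by (simp add: K_def)
  have Pp: "0 < mgf_real \<mu>" using mgf_real_pos \<mu> by simp
  define h where "h = min \<epsilon> (mgf_real \<mu> * (B - A) / (2 * K))"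
  have hp: "0 < h" using e Pp AB Kp by (auto simp: h_def)
  have he: "h \<le> \<epsilon>" and hK: "h \<le> mgf_real \<mu> * (B - A) / (2 * K)" by (auto simp: h_def)
  have "mgf_real (\<mu> + h) + mgf_real (\<mu> - h) \<le> 2 * mgf_real \<mu> + h\<^sup>2 * (8 / \<epsilon>\<^sup>2) * 2"
    by (rule mgf_second_difference_le[OF e(1) less_imp_le[OF hp]]) (use e he in auto)
  hence sd: "mgf_real (\<mu> + h) + mgf_real (\<mu> - h) \<le> 2 * mgf_real \<mu> + h\<^sup>2 * K"
    by (simp only: K_def mult.assoc)
  have "log_mgf \<mu> + B * h \<le> log_mgf (\<mu> + h)" using maxB[rule_format, of "\<mu> + h"] e he hp
    by (auto simp: algebra_simps)
  hence "exp (log_mgf \<mu>) * exp (B * h) \<le> exp (log_mgf (\<mu> + h))" by (simp add: exp_add[symmetric])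
  hence "mgf_real \<mu> * exp (B * h) \<le> mgf_real (\<mu> + h)"
    using exp_log_mgf[of \<mu>] exp_log_mgf[of "\<mu> + h"] \<mu> e he hp by simp
  moreover have "log_mgf \<mu> - A * h \<le> log_mgf (\<mu> - h)" using maxA[rule_format, of "\<mu> - h"] e he hp
    by (auto simp: algebra_simps)
  hence "exp (log_mgf \<mu>) * exp (- (A * h)) \<le> exp (log_mgf (\<mu> - h))"
    by (simp add: exp_add[symmetric])
  hence "mgf_real \<mu> * exp (- (A * h)) \<le> mgf_real (\<mu> - h)"
    using exp_log_mgf[of \<mu>] exp_log_mgf[of "\<mu> - h"] \<mu> e he hp by simp
  moreover have "mgf_real \<mu> * (1 + B * h) \<le> mgf_real \<mu> * exp (B * h)"
    using Pp exp_ge_add_one_self[of "B * h"] by (intro mult_left_mono) auto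
  moreover have "mgf_real \<mu> * (1 + - (A * h)) \<le> mgf_real \<mu> * exp (- (A * h))"
    using Pp exp_ge_add_one_self[of "- (A * h)"] by (intro mult_left_mono) auto
  ultimately have "mgf_real \<mu> * ((B - A) * h) \<le> h\<^sup>2 * K" using sd by (simp add: algebra_simps)
  hence "mgf_real \<mu> * (B - A) * h \<le> (h * K) * h" by (simp add: power2_eq_square mult_ac)
  hence "mgf_real \<mu> * (B - A) \<le> h * K" using hp by (simp add: mult.commute)
  moreover have "h * K \<le> mgf_real \<mu> * (B - A) / 2" using hK Kp by (simp add: field_simps)
  moreover have "0 < mgf_real \<mu> * (B - A)" using Pp AB by simp
  ultimately show False by simp
qed

lemma argmax_strict_mono:
  assumes AB: "A < B" and m1: "0 < m1" "m1 < 1" "\<forall>y\<in>{0..1}. A * y - log_mgf y \<le> A * m1 - log_mgf m1"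
    and m2: "0 < m2" "m2 < 1" "\<forall>y\<in>{0..1}. B * y - log_mgf y \<le> B * m2 - log_mgf m2"
  shows "m1 < m2"
proof -
  have "m1 \<le> m2"
  proof (rule ccontr)
    assume "\<not> m1 \<le> m2"
    moreover have "A * m2 - log_mgf m2 \<le> A * m1 - log_mgf m1" using m1(3) m2 by auto
    moreover have "B * m1 - log_mgf m1 \<le> B * m2 - log_mgf m2" using m2(3) m1 by auto
    ultimately have "(B - A) * (m1 - m2) \<le> 0" by (simp add: algebra_simps)
    moreover have "0 < (B - A) * (m1 - m2)" using AB \<open>\<not> m1 \<le> m2\<close> by simp
    ultimately show False by simp
  qed
  moreover have "m1 \<noteq> m2" using no_common_argmax[OF AB m1] m2 by blast
  ultimately show ?thesis by simp
qed

text \<open>The tilt is taken strictly between the maximizers of \<open>A y - log_mgf y\<close> and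
  \<open>B y - log_mgf y\<close> for \<open>C1 < A < B < C2\<close>.\<close>
lemma exists_tilt_point:
  assumes C1: "- KL M1 M2 < C1" and C12: "C1 < C2" and C2: "C2 < KL M2 M1"
  obtains \<mu> s s' where "0 < \<mu>" "\<mu> < 1" "0 < s" "0 < s'" "\<mu> + s \<le> 1" "0 \<le> \<mu> - s'"
    "exp (- s * C2) * mgf_real (\<mu> + s) < mgf_real \<mu>" "exp (s' * C1) * mgf_real (\<mu> - s') < mgf_real \<mu>"
proof -
  define A where "A = (2 * C1 + C2) / 3"
  define B where "B = (C1 + 2 * C2) / 3"
  have AB: "C1 < A" "A < B" "B < C2" using C12 by (auto simp: A_def B_def)
  obtain m1 where m1: "0 < m1" "m1 < 1" "\<forall>y\<in>{0..1}. A * y - log_mgf y \<le> A * m1 - log_mgf m1"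
    using exists_interior_argmax[of A] C1 C2 AB by auto
  obtain m2 where m2: "0 < m2" "m2 < 1" "\<forall>y\<in>{0..1}. B * y - log_mgf y \<le> B * m2 - log_mgf m2"
    using exists_interior_argmax[of B] C1 C2 AB by auto
  have "m1 < m2" by (rule argmax_strict_mono[OF AB(2) m1 m2])
  define \<mu> where "\<mu> = (m1 + m2) / 2"
  have \<mu>: "m1 < \<mu>" "\<mu> < m2" "0 < \<mu>" "\<mu> < 1" using \<open>m1 < m2\<close> m1 m2 by (auto simp: \<mu>_def)
  have "log_mgf m2 \<le> log_mgf \<mu> + B * (m2 - \<mu>)" using m2(3) \<mu> by (auto simp: algebra_simps)
  also have "\<dots> < log_mgf \<mu> + C2 * (m2 - \<mu>)" using AB \<mu> by simp
  finally have "exp (- (m2 - \<mu>) * C2) * exp (log_mgf m2) < exp (log_mgf \<mu>)"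
    by (simp add: exp_add[symmetric] algebra_simps)
  hence s1: "exp (- (m2 - \<mu>) * C2) * mgf_real (\<mu> + (m2 - \<mu>)) < mgf_real \<mu>"
    using exp_log_mgf[of m2] exp_log_mgf[of \<mu>] m2 \<mu> by simp
  have "C1 * (\<mu> - m1) < A * (\<mu> - m1)" using AB \<mu> by (intro mult_strict_right_mono) auto
  moreover have "A * \<mu> - log_mgf \<mu> \<le> A * m1 - log_mgf m1" using m1(3) \<mu> by simp
  ultimately have "log_mgf m1 + C1 * (\<mu> - m1) < log_mgf \<mu>" by (simp add: algebra_simps)
  hence "exp ((\<mu> - m1) * C1) * exp (log_mgf m1) < exp (log_mgf \<mu>)"
    by (simp add: exp_add[symmetric] algebra_simps)
  hence s2: "exp ((\<mu> - m1) * C1) * mgf_real (\<mu> - (\<mu> - m1)) < mgf_real \<mu>"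
    using exp_log_mgf[of m1] exp_log_mgf[of \<mu>] m1 \<mu> by simp
  show ?thesis by (rule that[OF \<mu>(3,4) _ _ _ _ s1 s2]) (use \<mu> m1 m2 in auto)
qed

end
section \<open>Error exponents of the decentralized test\<close>

locale bq_test = mutually_ac +
  fixes \<tau> :: real
  assumes KL12_pos: "0 < KL M1 M2" and KL21_pos: "0 < KL M2 M1"
    and tau_gt: "- KL M1 M2 < \<tau>" and tau_lt: "\<tau> < KL M2 M1"
begin

definition "quant_a = - KL M2 M1"
definition "quant_D = KL M1 M2 + KL M2 M1"
definition "quant_d = KL M1 M2 + \<tau>"
definition "rho n = 1 / (6 * (real n)\<^sup>2 * quant_D)"
definition "prod1 n = PiM {1..n} (\<lambda>_. M1)"
definition "prod2 n = PiM {1..n} (\<lambda>_. M2)"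
definition "llr_sum n y = (\<Sum>i\<in>{1..n}. L (y i))"
text \<open>The complement of the acceptance set \<open>A\<^sub>n\<close> (see \<open>accept_set_eq\<close>).\<close>
definition "low_set n E =
  {y \<in> space (prod1 n). bq_converges_at n E quant_a quant_D quant_d (rho n) (\<lambda>i. L (y i)) quant_a}"

lemma quant_D_pos: "0 < quant_D" using KL12_pos KL21_pos by (simp add: quant_D_def)

text \<open>The locale predicate only takes the parameters occurring in its assumptions, so \<open>a\<close>
  and \<open>r\<close> are absent.\<close>
lemma bq_cadmm_instance:
  assumes "simple_graph_on n E" "connected_on n E" "1 \<le> n"
  shows "bq_cadmm n E quant_D quant_d (rho n)"
  using assms KL12_pos KL21_pos tau_gt tau_lt quant_D_pos
  by unfold_locales (auto simp: rho_def quant_d_def quant_D_def)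

lemma threshold_eq: "quant_a + quant_D - quant_d = - \<tau>"
  by (simp add: quant_a_def quant_D_def quant_d_def)

lemma rho_scaled: "1 \<le> n \<Longrightarrow> rho n * quant_D * (real n)\<^sup>2 = 1/6"
  using quant_D_pos by (simp add: rho_def field_simps)

lemma prob_space_prod1: "prob_space (prod1 n)" unfolding prod1_def by (intro prob_space_PiM P1)
lemma prob_space_prod2: "prob_space (prod2 n)" unfolding prod2_def by (intro prob_space_PiM P2)

lemma sets_prod2: "sets (prod2 n) = sets (prod1 n)"
  unfolding prod1_def prod2_def by (rule sets_PiM_cong) (auto simp: sets_M2_eq_sets_M1)

lemma space_prod2: "space (prod2 n) = space (prod1 n)"
  using sets_eq_imp_space_eq[OF sets_prod2] .

text \<open>The choice of \<open>\<rho>\<close> squeezes the decision region \<open>low_set\<close> between two half-spaces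
  of the log-likelihood sum whose thresholds differ by less than one.\<close>
lemma low_set_if_llr_sum_lt:
  assumes "simple_graph_on n E" "connected_on n E" "1 \<le> n" "y \<in> space (prod1 n)"
    and "llr_sum n y < - (real n * \<tau>) - 1/2"
  shows "y \<in> low_set n E"
proof -
  interpret bq_cadmm n E quant_a quant_D quant_d "rho n" "\<lambda>i. L (y i)" by (rule bq_cadmm_instance[OF assms(1-3)])
  have "bq_converges_at n E quant_a quant_D quant_d (rho n) (\<lambda>i. L (y i)) quant_a"
    by (rule converges_low_if_sum_lt)
       (use assms(5) rho_scaled[OF assms(3)] threshold_eq in \<open>simp add: llr_sum_def thr_def\<close>)
  thus ?thesis using assms(4) by (simp add: low_set_def)
qed

lemma llr_sum_le_if_low_set:
  assumes "simple_graph_on n E" "connected_on n E" "1 \<le> n" "y \<in> low_set n E"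
  shows "llr_sum n y \<le> - (real n * \<tau>) + 1/3"
proof -
  interpret bq_cadmm n E quant_a quant_D quant_d "rho n" "\<lambda>i. L (y i)" by (rule bq_cadmm_instance[OF assms(1-3)])
  have "bq_converges_at n E quant_a quant_D quant_d (rho n) (\<lambda>i. L (y i)) quant_a"
    using assms(4) by (simp add: low_set_def)
  from sum_le_if_converges_low[OF this] show ?thesis
    using rho_scaled[OF assms(3)] threshold_eq by (simp add: llr_sum_def thr_def)
qed

lemma accept_set_eq:
  assumes "simple_graph_on n E" "connected_on n E" "1 \<le> n"
  shows "accept_set M1 M2 \<tau> n E = space (prod1 n) - low_set n E"
proof -
  have "(bq_cycles n E quant_a quant_D quant_d (rho n) (\<lambda>i. L (y i))
        \<or> bq_converges_at n E quant_a quant_D quant_d (rho n) (\<lambda>i. L (y i)) (KL M1 M2))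
      \<longleftrightarrow> \<not> bq_converges_at n E quant_a quant_D quant_d (rho n) (\<lambda>i. L (y i)) quant_a" for y
  proof -
    interpret bq_cadmm n E quant_a quant_D quant_d "rho n" "\<lambda>i. L (y i)" by (rule bq_cadmm_instance[OF assms])
    have "quant_a + quant_D = KL M1 M2" by (simp add: quant_a_def quant_D_def)
    then show ?thesis using not_converges_at_both unfolding bq_cycles_def by metis
  qed
  thus ?thesis
    unfolding accept_set_def low_set_def prod1_def Let_def
    by (auto simp: L_def quant_a_def quant_D_def quant_d_def rho_def)
qed

lemma sets_low_set: "low_set n E \<in> sets (prod1 n)"
  unfolding low_set_def prod1_def by (rule sets_bq_converges_at[OF L_measurable_M1])

lemma Lam_eq: "Lam M1 M2 l = (if mgf l = \<infinity> then \<infinity> else ereal (ln (enn2real (mgf l))))"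
  by (simp add: Lam_def mgf_def L_def Let_def)

lemma Lam_cases:
  obtains "Lam M1 M2 l = \<infinity>" | p where "0 < p" "mgf l = ennreal p" "Lam M1 M2 l = ereal (ln p)"
proof (cases "mgf l = \<infinity>")
  case False
  then have "mgf l = ennreal (enn2real (mgf l))" by (simp add: less_top ennreal_enn2real_if)
  moreover have "0 < enn2real (mgf l)" using mgf_pos[of l] False by (simp add: enn2real_positive_iff less_top)
  ultimately show ?thesis using that(2) False by (simp add: Lam_eq)
qed (simp add: Lam_eq that(1))

lemma Lam_eq_log_mgf:
  assumes "0 \<le> \<mu>" "\<mu> \<le> 1"
  shows "Lam M1 M2 \<mu> = ereal (log_mgf \<mu>)"
proof -
  have "mgf \<mu> \<noteq> \<top>" using mgf_eq_ennreal[OF assms] by simp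
  then show ?thesis by (simp add: Lam_eq log_mgf_def mgf_real_def)
qed

lemma Lam_star_ge: "0 \<le> \<mu> \<Longrightarrow> \<mu> \<le> 1 \<Longrightarrow> ereal (\<mu> * \<tau> - log_mgf \<mu>) \<le> Lam_star M1 M2 \<tau>"
  unfolding Lam_star_def by (rule SUP_upper2[of \<mu>]) (simp_all add: Lam_eq_log_mgf)

text \<open>Jensen's inequality under \<open>M1\<close> and under \<open>M2\<close>: these handle the tilts outside \<open>[0, 1]\<close>,
  which never beat the endpoints.\<close>
lemma ln_mgf_ge_KL12:
  assumes "mgf l = ennreal p" "0 < p"
  shows "- l * KL M1 M2 \<le> ln p"
proof -
  have "ennreal (exp (integral\<^sup>L M1 (\<lambda>x. - l * L x))) \<le> mgf l"
    unfolding mgf_def by (rule exp_integral_le_nn_integral_exp[OF P1]) (use integrable_L_M1 in simp)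
  then have "exp (- l * KL M1 M2) \<le> p" using assms integral_L_M1 by (simp add: ennreal_le_iff)
  then show ?thesis using assms(2) by (simp add: ln_ge_iff)
qed

lemma ln_mgf_ge_KL21:
  assumes "mgf l = ennreal p" "0 < p"
  shows "(l - 1) * KL M2 M1 \<le> ln p"
proof -
  have "ennreal (exp (integral\<^sup>L M2 (\<lambda>x. (1 - l) * L x))) \<le> mgf l"
    using exp_integral_le_nn_integral_exp[OF P2, of "\<lambda>x. (1 - l) * L x"] integrable_L_M2
      nn_integral_M2_exp_mult_L[of "1 - l"] by simp
  moreover have "integral\<^sup>L M2 (\<lambda>x. (1 - l) * L x) = (l - 1) * KL M2 M1"
    by (simp only: integral_mult_right_zero integral_L_M2) (simp add: algebra_simps)
  ultimately have "exp ((l - 1) * KL M2 M1) \<le> p" using assms by (simp add: ennreal_le_iff)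
  then show ?thesis using assms(2) by (simp add: ln_ge_iff)
qed

lemma prob1_low_set_le:
  assumes graph: "simple_graph_on n E" "connected_on n E" "1 \<le> n"
    and l: "0 \<le> l" and p: "mgf l = ennreal p" "0 \<le> p"
  shows "measure (prod1 n) (low_set n E) \<le> exp (l / 3 - n * (l * \<tau>)) * p ^ n"
proof -
  interpret prob_space "prod1 n" by (rule prob_space_prod1)
  let ?A = "{y \<in> space (prod1 n). real n * \<tau> - 1/3 \<le> (\<Sum>i\<in>{1..n}. - L (y i))}"
  have "low_set n E \<subseteq> ?A"
    using llr_sum_le_if_low_set[OF graph] by (fastforce simp: low_set_def llr_sum_def sum_negf)
  moreover have "?A \<in> sets (prod1 n)" unfolding prod1_def by measurable
  ultimately have "measure (prod1 n) (low_set n E) \<le> measure (prod1 n) ?A" by (rule finite_measure_mono)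
  moreover have "emeasure (prod1 n) ?A
      \<le> ennreal (exp (- l * (real n * \<tau> - 1/3))) * (\<integral>\<^sup>+x. ennreal (exp (l * (- L x))) \<partial>M1) ^ card {1..n}"
    unfolding prod1_def by (rule chernoff_PiM[OF P1 _ _ l]) auto
  then have "measure (prod1 n) ?A \<le> exp (- l * (real n * \<tau> - 1/3)) * p ^ n"
    using p by (simp add: mgf_def emeasure_eq_measure ennreal_power ennreal_mult'[symmetric] ennreal_le_iff)
  moreover have "- l * (real n * \<tau> - 1/3) = l / 3 - n * (l * \<tau>)" by (simp add: algebra_simps)
  ultimately show ?thesis by simp
qed

lemma prob2_not_low_set_le:
  assumes graph: "simple_graph_on n E" "connected_on n E" "1 \<le> n"
    and \<mu>: "0 \<le> \<mu>" and p: "mgf (1 - \<mu>) = ennreal p" "0 \<le> p"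
  shows "measure (prod2 n) (space (prod1 n) - low_set n E) \<le> exp (\<mu> / 2 + n * (\<mu> * \<tau>)) * p ^ n"
proof -
  interpret prob_space "prod2 n" by (rule prob_space_prod2)
  let ?A = "{y \<in> space (prod2 n). - (real n * \<tau>) - 1/2 \<le> (\<Sum>i\<in>{1..n}. L (y i))}"
  have "space (prod1 n) - low_set n E \<subseteq> ?A"
    using low_set_if_llr_sum_lt[OF graph] space_prod2 by (fastforce simp: llr_sum_def)
  moreover have "?A \<in> sets (prod2 n)" unfolding prod2_def by measurable
  ultimately have "measure (prod2 n) (space (prod1 n) - low_set n E) \<le> measure (prod2 n) ?A"
    by (rule finite_measure_mono)
  moreover have "emeasure (prod2 n) ?A
      \<le> ennreal (exp (- \<mu> * (- (real n * \<tau>) - 1/2))) * (\<integral>\<^sup>+x. ennreal (exp (\<mu> * L x)) \<partial>M2) ^ card {1..n}"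
    unfolding prod2_def by (rule chernoff_PiM[OF P2 _ _ \<mu>]) auto
  then have "measure (prod2 n) ?A \<le> exp (- \<mu> * (- (real n * \<tau>) - 1/2)) * p ^ n"
    using p nn_integral_M2_exp_mult_L[of \<mu>]
    by (simp add: emeasure_eq_measure ennreal_power ennreal_mult'[symmetric] ennreal_le_iff)
  moreover have "- \<mu> * (- (real n * \<tau>) - 1/2) = \<mu> / 2 + n * (\<mu> * \<tau>)" by (simp add: algebra_simps)
  ultimately show ?thesis by simp
qed

lemma tilted_window_bound_prod1:
  assumes "0 < \<mu>" "\<mu> < 1" "0 < s" "0 < s'" "\<mu> + s \<le> 1" "0 \<le> \<mu> - s'" and "C1 < C2"
  shows "mgf_real \<mu> ^ n \<le> exp (n * (\<mu> * C2)) *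
      measure (prod1 n) {y \<in> space (prod1 n). n * C1 < - llr_sum n y \<and> - llr_sum n y \<le> n * C2}
     + (exp (- s * C2) * mgf_real (\<mu> + s)) ^ n + (exp (s' * C1) * mgf_real (\<mu> - s')) ^ n"
proof -
  have mgf: "(\<integral>\<^sup>+x. ennreal (exp (v * (- L x))) \<partial>M1) = ennreal (mgf_real v)" if "0 \<le> v" "v \<le> 1" for v
    using mgf_eq_ennreal[OF that] unfolding mgf_def by simp
  have T: "mgf_real \<mu> ^ card {1..n} \<le> exp (card {1..n} * max (\<mu> * C1) (\<mu> * C2)) *
      measure (prod1 n) {y \<in> space (prod1 n). card {1..n} * C1 < (\<Sum>i\<in>{1..n}. - L (y i))
        \<and> (\<Sum>i\<in>{1..n}. - L (y i)) \<le> card {1..n} * C2}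
     + exp (- s * card {1..n} * C2) * mgf_real (\<mu> + s) ^ card {1..n}
     + exp (s' * card {1..n} * C1) * mgf_real (\<mu> - s') ^ card {1..n}"
    unfolding prod1_def
    by (rule tilted_window_lower_bound_PiM[OF P1 _ _ _ _ mgf mgf mgf])
       (use assms mgf_real_pos in \<open>auto intro: less_imp_le\<close>)
  have mx: "max (\<mu> * C1) (\<mu> * C2) = \<mu> * C2" using assms by (simp add: max_def)
  have e: "exp (- s * n * C2) = exp (- s * C2) ^ n" "exp (s' * n * C1) = exp (s' * C1) ^ n"
    using exp_of_nat_mult[of n "- s * C2"] exp_of_nat_mult[of n "s' * C1"] by (simp_all add: mult_ac)
  have cn: "card {1..n} = n" by simp
  from T show ?thesis
    by (simp only: cn mx e) (simp add: llr_sum_def sum_negf power_mult_distrib)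
qed

lemma tilted_window_bound_prod2:
  assumes "0 < \<mu>" "\<mu> < 1" "0 < s" "0 < s'" "\<mu> + s \<le> 1" "0 \<le> \<mu> - s'" and "C1 < C2"
  shows "mgf_real \<mu> ^ n \<le> exp (n * ((1 - \<mu>) * (- C1))) *
      measure (prod2 n) {y \<in> space (prod2 n). n * (- C2) < llr_sum n y \<and> llr_sum n y \<le> n * (- C1)}
     + (exp (s' * C1) * mgf_real (\<mu> - s')) ^ n + (exp (- s * C2) * mgf_real (\<mu> + s)) ^ n"
proof -
  have mgf: "(\<integral>\<^sup>+x. ennreal (exp ((1 - v) * L x)) \<partial>M2) = ennreal (mgf_real v)" if "0 \<le> v" "v \<le> 1" for v
    using mgf_eq_ennreal[OF that] nn_integral_M2_exp_mult_L[of "1 - v"] by simp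
  have shift: "1 - \<mu> + s' = 1 - (\<mu> - s')" "1 - \<mu> - s = 1 - (\<mu> + s)" by simp_all
  have T: "mgf_real \<mu> ^ card {1..n} \<le> exp (card {1..n} * max ((1 - \<mu>) * (- C2)) ((1 - \<mu>) * (- C1))) *
      measure (prod2 n) {y \<in> space (prod2 n). card {1..n} * (- C2) < (\<Sum>i\<in>{1..n}. L (y i))
        \<and> (\<Sum>i\<in>{1..n}. L (y i)) \<le> card {1..n} * (- C1)}
     + exp (- s' * card {1..n} * (- C1)) * mgf_real (\<mu> - s') ^ card {1..n}
     + exp (s * card {1..n} * (- C2)) * mgf_real (\<mu> + s) ^ card {1..n}"
    unfolding prod2_def
    by (rule tilted_window_lower_bound_PiM[OF P2 _ _ _ _ mgf mgf[of "\<mu> - s'", unfolded shift(1)[symmetric]]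
          mgf[of "\<mu> + s", unfolded shift(2)[symmetric]]])
       (use assms mgf_real_pos in \<open>auto intro: less_imp_le\<close>)
  have mx: "max ((1 - \<mu>) * (- C2)) ((1 - \<mu>) * (- C1)) = (1 - \<mu>) * (- C1)"
    using assms by (simp add: max_def)
  have e: "exp (- s' * n * (- C1)) = exp (s' * C1) ^ n" "exp (s * n * (- C2)) = exp (- s * C2) ^ n"
    using exp_of_nat_mult[of n "s' * C1"] exp_of_nat_mult[of n "- s * C2"] by (simp_all add: mult_ac)
  have cn: "card {1..n} = n" by simp
  from T show ?thesis by (simp only: cn mx e) (simp add: llr_sum_def power_mult_distrib)
qed

definition "err1 G n = measure (prod1 n) (space (prod1 n) - accept_set M1 M2 \<tau> n (G n))"
definition "err2 G n = measure (prod2 n) (accept_set M1 M2 \<tau> n (G n))"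

lemma err_bounds: "0 \<le> err1 G n" "err1 G n \<le> 1" "0 \<le> err2 G n" "err2 G n \<le> 1"
  using prob_space.prob_le_1[OF prob_space_prod1] prob_space.prob_le_1[OF prob_space_prod2]
  by (auto simp: err1_def err2_def)

lemma err_eq_low_set:
  assumes "simple_graph_on n (G n)" "connected_on n (G n)" "1 \<le> n"
  shows "err1 G n = measure (prod1 n) (low_set n (G n))"
    and "err2 G n = measure (prod2 n) (space (prod1 n) - low_set n (G n))"
proof -
  have "space (prod1 n) - (space (prod1 n) - low_set n (G n)) = low_set n (G n)"
    using sets.sets_into_space[OF sets_low_set] by blast
  then show "err1 G n = measure (prod1 n) (low_set n (G n))"
    using accept_set_eq[OF assms] by (simp add: err1_def)
  show "err2 G n = measure (prod2 n) (space (prod1 n) - low_set n (G n))"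
    using accept_set_eq[OF assms] by (simp add: err2_def)
qed

lemma err1_exponent_ge:
  assumes graphs: "\<forall>n\<ge>2. simple_graph_on n (G n) \<and> connected_on n (G n)"
  shows "Lam_star M1 M2 \<tau> \<le> liminf (\<lambda>n. err_exp n (err1 G n))"
  unfolding Lam_star_def
proof (rule SUP_least)
  fix l :: real
  show "ereal (l * \<tau>) - Lam M1 M2 l \<le> liminf (\<lambda>n. err_exp n (err1 G n))"
  proof (rule Lam_cases[of l])
    fix p assume p: "0 < p" "mgf l = ennreal p" and Lam: "Lam M1 M2 l = ereal (ln p)"
    show ?thesis
    proof (cases "0 \<le> l")
      case True
      have "eventually (\<lambda>n. err1 G n \<le> exp (l / 3 - n * (l * \<tau>)) * p ^ n) sequentially"
        using eventually_ge_at_top[of "2::nat"]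
      proof eventually_elim
        case (elim n)
        then have graph: "simple_graph_on n (G n)" "connected_on n (G n)" "1 \<le> n" using graphs by auto
        show ?case
          using err_eq_low_set(1)[of n G, OF graph] prob1_low_set_le[OF graph True p(2)] p(1) by simp
      qed
      from liminf_err_exp_ge[OF err_bounds(1) p(1) this] show ?thesis using Lam by simp
    next
      case False
      have "l * (\<tau> + KL M1 M2) < 0" using False tau_gt by (simp add: mult_neg_pos)
      then have "ereal (l * \<tau> - ln p) \<le> 0" using ln_mgf_ge_KL12[OF p(2,1)] by (simp add: algebra_simps)
      also have "0 \<le> liminf (\<lambda>n. err_exp n (err1 G n))" by (rule liminf_err_exp_nonneg[OF err_bounds(1,2)])
      finally show ?thesis using Lam by simp
    qed
  qed simp
qed

lemma err2_exponent_ge: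
  assumes graphs: "\<forall>n\<ge>2. simple_graph_on n (G n) \<and> connected_on n (G n)"
  shows "Lam_star M1 M2 \<tau> - ereal \<tau> \<le> liminf (\<lambda>n. err_exp n (err2 G n))"
proof -
  have "Lam_star M1 M2 \<tau> \<le> liminf (\<lambda>n. err_exp n (err2 G n)) + ereal \<tau>"
    unfolding Lam_star_def
  proof (rule SUP_least)
    fix l :: real
    show "ereal (l * \<tau>) - Lam M1 M2 l \<le> liminf (\<lambda>n. err_exp n (err2 G n)) + ereal \<tau>"
    proof (rule Lam_cases[of l])
      fix p assume p: "0 < p" "mgf l = ennreal p" and Lam: "Lam M1 M2 l = ereal (ln p)"
      show ?thesis
      proof (cases "l \<le> 1")
        case True
        have "eventually (\<lambda>n. err2 G n \<le> exp ((1 - l) / 2 - n * (- ((1 - l) * \<tau>))) * p ^ n) sequentially"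
          using eventually_ge_at_top[of "2::nat"]
        proof eventually_elim
          case (elim n)
          then have graph: "simple_graph_on n (G n)" "connected_on n (G n)" "1 \<le> n" using graphs by auto
          show ?case
            using err_eq_low_set(2)[of n G, OF graph] prob2_not_low_set_le[OF graph, of "1 - l" p] True p by simp
        qed
        from liminf_err_exp_ge[OF err_bounds(3) p(1) this]
        have "ereal (- ((1 - l) * \<tau>) - ln p) + ereal \<tau> \<le> liminf (\<lambda>n. err_exp n (err2 G n)) + ereal \<tau>"
          by (rule add_right_mono)
        then show ?thesis using Lam by (simp add: algebra_simps)
      next
        case False
        have "(l - 1) * (\<tau> - KL M2 M1) < 0" using False tau_lt by (simp add: mult_pos_neg)
        then have "ereal (l * \<tau> - ln p) \<le> 0 + ereal \<tau>"
          using ln_mgf_ge_KL21[OF p(2,1)] by (simp add: algebra_simps)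
        also have "\<dots> \<le> liminf (\<lambda>n. err_exp n (err2 G n)) + ereal \<tau>"
          by (intro add_right_mono liminf_err_exp_nonneg err_bounds)
        finally show ?thesis using Lam by simp
      qed
    qed simp
  qed
  then show ?thesis by (simp add: ereal_minus_le_iff)
qed

text \<open>Upper bounds on the exponents: at a suitable tilt \<open>\<mu>\<close>, the tilted mass \<open>mgf_real \<mu> ^ n\<close>
  is carried by a window of the log-likelihood sum that lies inside the error event.\<close>
lemma err1_exponent_le_at:
  assumes graphs: "\<forall>n\<ge>2. simple_graph_on n (G n) \<and> connected_on n (G n)"
    and C: "\<tau> < C1" "C1 < C2" "C2 < KL M2 M1"
  obtains \<mu> where "0 < \<mu>" "\<mu> < 1"
    "liminf (\<lambda>n. err_exp n (err1 G n)) \<le> ereal (\<mu> * C2 - ln (mgf_real \<mu>))"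
proof -
  obtain \<mu> s s' where tilt: "0 < \<mu>" "\<mu> < 1" "0 < s" "0 < s'" "\<mu> + s \<le> 1" "0 \<le> \<mu> - s'"
      "exp (- s * C2) * mgf_real (\<mu> + s) < mgf_real \<mu>" "exp (s' * C1) * mgf_real (\<mu> - s') < mgf_real \<mu>"
    by (rule exists_tilt_point[of C1 C2]) (use C tau_gt in auto)
  have pos: "0 < C1 - \<tau>" using C(1) by simp
  have "liminf (\<lambda>n. err_exp n (err1 G n)) \<le> ereal (\<mu> * C2 - ln (mgf_real \<mu>))"
  proof (rule liminf_err_exp_le[OF err_bounds(1) mgf_real_pos _ tilt(7) _ tilt(8)])
    show "eventually (\<lambda>n. mgf_real \<mu> ^ n \<le> exp (n * (\<mu> * C2)) * err1 G n
        + (exp (- s * C2) * mgf_real (\<mu> + s)) ^ n + (exp (s' * C1) * mgf_real (\<mu> - s')) ^ n) sequentially"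
      using eventually_ge_at_top[of "2::nat"] eventually_one_le_real_mult[OF pos]
    proof eventually_elim
      case (elim n)
      then have graph: "simple_graph_on n (G n)" "connected_on n (G n)" "1 \<le> n" using graphs by auto
      interpret prob_space "prod1 n" by (rule prob_space_prod1)
      have "- (n * C1) \<le> - (real n * \<tau>) - 1/2" using elim(2) by (simp add: algebra_simps)
      then have "{y \<in> space (prod1 n). n * C1 < - llr_sum n y \<and> - llr_sum n y \<le> n * C2} \<subseteq> low_set n (G n)"
        using low_set_if_llr_sum_lt[OF graph] by force
      then have "measure (prod1 n) {y \<in> space (prod1 n). n * C1 < - llr_sum n y \<and> - llr_sum n y \<le> n * C2}
          \<le> err1 G n"
        using err_eq_low_set(1)[of n G, OF graph] by (simp add: finite_measure_mono sets_low_set)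
      then have "exp (n * (\<mu> * C2)) * measure (prod1 n) {y \<in> space (prod1 n). n * C1 < - llr_sum n y \<and> - llr_sum n y \<le> n * C2}
          \<le> exp (n * (\<mu> * C2)) * err1 G n"
        by (rule mult_left_mono) simp
      then show ?case using tilted_window_bound_prod1[OF tilt(1-6) C(2), of n] by linarith
    qed
  qed (use tilt mgf_real_pos in \<open>auto intro: less_imp_le\<close>)
  then show ?thesis using that tilt by blast
qed

lemma err2_exponent_le_at:
  assumes graphs: "\<forall>n\<ge>2. simple_graph_on n (G n) \<and> connected_on n (G n)"
    and C: "- KL M1 M2 < C1" "C1 < C2" "C2 < \<tau>"
  obtains \<mu> where "0 < \<mu>" "\<mu> < 1"
    "liminf (\<lambda>n. err_exp n (err2 G n)) \<le> ereal ((1 - \<mu>) * (- C1) - ln (mgf_real \<mu>))"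
proof -
  obtain \<mu> s s' where tilt: "0 < \<mu>" "\<mu> < 1" "0 < s" "0 < s'" "\<mu> + s \<le> 1" "0 \<le> \<mu> - s'"
      "exp (- s * C2) * mgf_real (\<mu> + s) < mgf_real \<mu>" "exp (s' * C1) * mgf_real (\<mu> - s') < mgf_real \<mu>"
    by (rule exists_tilt_point[of C1 C2]) (use C tau_lt in auto)
  have pos: "0 < \<tau> - C2" using C(3) by simp
  have "liminf (\<lambda>n. err_exp n (err2 G n)) \<le> ereal ((1 - \<mu>) * (- C1) - ln (mgf_real \<mu>))"
  proof (rule liminf_err_exp_le[OF err_bounds(3) mgf_real_pos _ tilt(8) _ tilt(7)])
    show "eventually (\<lambda>n. mgf_real \<mu> ^ n \<le> exp (n * ((1 - \<mu>) * (- C1))) * err2 G n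
        + (exp (s' * C1) * mgf_real (\<mu> - s')) ^ n + (exp (- s * C2) * mgf_real (\<mu> + s)) ^ n) sequentially"
      using eventually_ge_at_top[of "2::nat"] eventually_one_le_real_mult[OF pos]
    proof eventually_elim
      case (elim n)
      then have graph: "simple_graph_on n (G n)" "connected_on n (G n)" "1 \<le> n" using graphs by auto
      interpret prob_space "prod2 n" by (rule prob_space_prod2)
      have "- (real n * \<tau>) + 1/3 < n * (- C2)" using elim(2) by (simp add: algebra_simps)
      then have "{y \<in> space (prod2 n). n * (- C2) < llr_sum n y \<and> llr_sum n y \<le> n * (- C1)}
          \<subseteq> space (prod1 n) - low_set n (G n)"
        using llr_sum_le_if_low_set[OF graph] space_prod2 by force
      moreover have "space (prod1 n) - low_set n (G n) \<in> sets (prod2 n)"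
        using sets_low_set by (metis sets.Diff sets.top space_prod2 sets_prod2)
      ultimately have "measure (prod2 n) {y \<in> space (prod2 n). n * (- C2) < llr_sum n y \<and> llr_sum n y \<le> n * (- C1)}
          \<le> err2 G n"
        using err_eq_low_set(2)[of n G, OF graph] by (simp add: finite_measure_mono)
      then have "exp (n * ((1 - \<mu>) * (- C1))) * measure (prod2 n) {y \<in> space (prod2 n). n * (- C2) < llr_sum n y \<and> llr_sum n y \<le> n * (- C1)}
          \<le> exp (n * ((1 - \<mu>) * (- C1))) * err2 G n"
        by (rule mult_left_mono) simp
      then show ?case using tilted_window_bound_prod2[OF tilt(1-6) C(2), of n] by linarith
    qed
  qed (use tilt mgf_real_pos in \<open>auto intro: less_imp_le\<close>)
  then show ?thesis using that tilt by blast
qed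

lemma err1_exponent_le:
  assumes graphs: "\<forall>n\<ge>2. simple_graph_on n (G n) \<and> connected_on n (G n)"
  shows "liminf (\<lambda>n. err_exp n (err1 G n)) \<le> Lam_star M1 M2 \<tau>"
proof (rule ereal_le_epsilon2)
  fix \<delta> :: real assume "0 < \<delta>"
  define \<eta> where "\<eta> = min \<delta> (KL M2 M1 - \<tau>) / 2"
  have \<eta>: "0 < \<eta>" "2 * \<eta> \<le> \<delta>" "2 * \<eta> \<le> KL M2 M1 - \<tau>" using \<open>0 < \<delta>\<close> tau_lt by (auto simp: \<eta>_def)
  obtain \<mu> where \<mu>: "0 < \<mu>" "\<mu> < 1"
    and le: "liminf (\<lambda>n. err_exp n (err1 G n)) \<le> ereal (\<mu> * (\<tau> + \<eta>) - ln (mgf_real \<mu>))"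
    by (rule err1_exponent_le_at[OF graphs, of "\<tau> + \<eta> / 2" "\<tau> + \<eta>"]) (use \<eta> in auto)
  have "\<mu> * \<eta> \<le> \<eta>" using \<mu> \<eta> by (intro mult_left_le_one_le) auto
  then have "\<mu> * \<eta> \<le> \<delta>" using \<eta> by linarith
  then have "\<mu> * (\<tau> + \<eta>) - ln (mgf_real \<mu>) \<le> (\<mu> * \<tau> - log_mgf \<mu>) + \<delta>"
    by (simp add: log_mgf_def algebra_simps)
  then have "ereal (\<mu> * (\<tau> + \<eta>) - ln (mgf_real \<mu>)) \<le> ereal (\<mu> * \<tau> - log_mgf \<mu>) + ereal \<delta>" by simp
  also have "\<dots> \<le> Lam_star M1 M2 \<tau> + ereal \<delta>" using Lam_star_ge \<mu> by (intro add_right_mono) simp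
  finally show "liminf (\<lambda>n. err_exp n (err1 G n)) \<le> Lam_star M1 M2 \<tau> + ereal \<delta>" using le by simp
qed

lemma err2_exponent_le:
  assumes graphs: "\<forall>n\<ge>2. simple_graph_on n (G n) \<and> connected_on n (G n)"
  shows "liminf (\<lambda>n. err_exp n (err2 G n)) \<le> Lam_star M1 M2 \<tau> - ereal \<tau>"
proof (rule ereal_le_epsilon2)
  fix \<delta> :: real assume "0 < \<delta>"
  define \<eta> where "\<eta> = min \<delta> (\<tau> + KL M1 M2) / 2"
  have \<eta>: "0 < \<eta>" "2 * \<eta> \<le> \<delta>" "2 * \<eta> \<le> \<tau> + KL M1 M2" using \<open>0 < \<delta>\<close> tau_gt by (auto simp: \<eta>_def)
  obtain \<mu> where \<mu>: "0 < \<mu>" "\<mu> < 1"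
    and le: "liminf (\<lambda>n. err_exp n (err2 G n)) \<le> ereal ((1 - \<mu>) * (- (\<tau> - \<eta>)) - ln (mgf_real \<mu>))"
    by (rule err2_exponent_le_at[OF graphs, of "\<tau> - \<eta>" "\<tau> - \<eta> / 2"]) (use \<eta> in auto)
  have "(1 - \<mu>) * \<eta> \<le> \<eta>" using \<mu> \<eta> by (intro mult_left_le_one_le) auto
  then have "(1 - \<mu>) * \<eta> \<le> \<delta>" using \<eta> by linarith
  then have real_le: "(1 - \<mu>) * (- (\<tau> - \<eta>)) - ln (mgf_real \<mu>) \<le> (\<mu> * \<tau> - log_mgf \<mu>) - \<tau> + \<delta>"
    by (simp add: log_mgf_def algebra_simps)
  have "ereal (\<mu> * \<tau> - log_mgf \<mu>) \<le> Lam_star M1 M2 \<tau>" using Lam_star_ge \<mu> by simp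
  with real_le have "ereal ((1 - \<mu>) * (- (\<tau> - \<eta>)) - ln (mgf_real \<mu>)) \<le> Lam_star M1 M2 \<tau> - ereal \<tau> + ereal \<delta>"
    by (cases "Lam_star M1 M2 \<tau>") auto
  then show "liminf (\<lambda>n. err_exp n (err2 G n)) \<le> Lam_star M1 M2 \<tau> - ereal \<tau> + ereal \<delta>" using le by simp
qed

end

theorem theorem6:
  fixes M1 M2 :: "'a::polish_space measure" and \<tau> :: real
    and G :: "nat \<Rightarrow> nat \<Rightarrow> nat \<Rightarrow> bool"
  assumes "prob_space M1" and "prob_space M2"
    and "sets M1 = sets borel" and "sets M2 = sets borel"
    and "absolutely_continuous M1 M2" and "absolutely_continuous M2 M1"
    and "integrable M1 (llr M1 M2)" and "integrable M2 (llr M2 M1)"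
    and "0 < KL M1 M2" and "0 < KL M2 M1"
    and "- KL M1 M2 < \<tau>" and "\<tau> < KL M2 M1"
    and "\<forall>n\<ge>2. simple_graph_on n (G n) \<and> connected_on n (G n)"
  defines "\<alpha> \<equiv> \<lambda>n. measure (PiM {1..n} (\<lambda>_. M1)) (space (PiM {1..n} (\<lambda>_. M1)) - accept_set M1 M2 \<tau> n (G n))"
    and "\<beta> \<equiv> \<lambda>n. measure (PiM {1..n} (\<lambda>_. M2)) (accept_set M1 M2 \<tau> n (G n))"
  shows "liminf (\<lambda>n. err_exp n (\<alpha> n)) = Lam_star M1 M2 \<tau>
       \<and> liminf (\<lambda>n. err_exp n (\<beta> n)) = Lam_star M1 M2 \<tau> - ereal \<tau>"
proof -
  have "bq_test M1 M2 \<tau>"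
    unfolding bq_test_def bq_test_axioms_def mutually_ac_def using assms(1-12) by simp
  then interpret bq_test M1 M2 \<tau> .
  have "\<alpha> = err1 G" "\<beta> = err2 G"
    by (simp_all add: \<alpha>_def \<beta>_def err1_def err2_def prod1_def prod2_def fun_eq_iff)
  then show ?thesis
    using err1_exponent_ge err1_exponent_le err2_exponent_ge err2_exponent_le assms(13)
    by (simp add: order.antisym)
qed

end
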